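(* Let $0<R<1$, $\lambda=1-R$, and let $0<\gamma\le\frac12$ satisfy $h(\gamma)>\lambda$. For $n$ such that $\lambda n$ and $i=\gamma n$ are integers, let $M$ be a uniformly random $\lambda n\times n$ binary matrix and let $C=\{x\in\{0,1\}^n: Mx=0\}$. Then, as $n\to\infty$ (over such $n$): 1. If $\psi(4,\gamma)<\lambda$, there is a constant $c>0$ (independent of $n$) such that with probability tending to $1$, $\frac1n\log_2 N_i(C)\le 2h(\gamma)-2(1-R)-c$ (where $\log_2 0=-\infty$). 2. If $\psi(4,\gamma)>\lambda$, then for every $\delta>0$, with probability tending to $1$, \[ \Big|\frac1n\log_2 N_i(C)-\big(\psi(4,\gamma)+2h(\gamma)-3(1-R)\big)\Big|\le\delta. \]
   Context: $h(t)=t\log_2\frac1t+(1-t)\log_2\frac1{1-t}$ is the binary entropy function. $L_i=\{x\in\{0,1\}^n:|x|=i\}$ is the set of vectors of Hamming weight $i$. For a linear code $C$, $N_i(C)$ is the number of ordered 4-tuples $(u_1,u_2,u_3,u_4)\in(C\cap L_i)^4$ with $u_1+u_2+u_3+u_4=0$ (over $\mathbb F_2$) which are non-trivial, i.e. the $u_j$ are pairwise distinct (equivalently, $u_1+u_2+u_3+u_4=0$ is the only nontrivial linear dependence among them, so they span a space of dimension 3). The function $\psi(4,\gamma)$ is defined by $\psi(4,\gamma)=\lim_{n\to\infty}\frac1n\log_2\big|\{(u_1,\dots,u_4)\in L_{\gamma n}^4: u_1+u_2+u_3+u_4=0\}\big|-2h(\gamma)$ (limit over $n$ with $\gamma n$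 integer). *)

theory Defs
  imports "HOL-Analysis.Analysis"
begin

definition bin_entropy :: "real \<Rightarrow> real" where
  "bin_entropy t = t * log 2 (1 / t) + (1 - t) * log 2 (1 / (1 - t))"

text \<open>Vectors of {0,1}^n are represented by their supports, subsets of {..<n};
  addition over F_2 is symmetric difference, Hamming weight is cardinality.\<close>
definition sdiff :: "nat set \<Rightarrow> nat set \<Rightarrow> nat set" where
  "sdiff A B = (A - B) \<union> (B - A)"

definition layer :: "nat \<Rightarrow> nat \<Rightarrow> nat set set" where
  "layer n i = {x. x \<subseteq> {..<n} \<and> card x = i}"

text \<open>Binary m x n matrices, represented by the set of positions (row, column) carrying a 1.\<close>
definition matrices :: "nat \<Rightarrow> nat \<Rightarrow> (nat \<times> nat) set set" where
  "matrices m n = Pow ({..<m} \<times> {..<n})"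

definition kernel_code :: "nat \<Rightarrow> nat \<Rightarrow> (nat \<times> nat) set \<Rightarrow> nat set set" where
  "kernel_code m n M = {x. x \<subseteq> {..<n} \<and> (\<forall>r<m. even (card {j \<in> x. (r, j) \<in> M}))}"

definition zero_sum_4tuples :: "nat set set \<Rightarrow> (nat set \<times> nat set \<times> nat set \<times> nat set) set" where
  "zero_sum_4tuples S = {(u1, u2, u3, u4). u1 \<in> S \<and> u2 \<in> S \<and> u3 \<in> S \<and> u4 \<in> S \<and>
      sdiff (sdiff u1 u2) (sdiff u3 u4) = {}}"

definition N_count :: "nat \<Rightarrow> nat \<Rightarrow> nat set set \<Rightarrow> nat" where
  "N_count n i C = card {(u1, u2, u3, u4) \<in> zero_sum_4tuples (C \<inter> layer n i).
      u1 \<noteq> u2 \<and> u1 \<noteq> u3 \<and> u1 \<noteq> u4 \<and> u2 \<noteq> u3 \<and> u2 \<noteq> u4 \<and> u3 \<noteq> u4}"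

definition int_mult_filter :: "real \<Rightarrow> nat filter" where
  "int_mult_filter x = inf at_top (principal {n. \<exists>k::nat. real k = x * real n})"

definition psi4 :: "real \<Rightarrow> real" where
  "psi4 \<gamma> = Lim (int_mult_filter \<gamma>)
      (\<lambda>n. log 2 (real (card (zero_sum_4tuples (layer n (nat \<lfloor>\<gamma> * real n\<rfloor>))))) / real n)
    - 2 * bin_entropy \<gamma>"

definition prob_matrix :: "nat \<Rightarrow> nat \<Rightarrow> ((nat \<times> nat) set \<Rightarrow> bool) \<Rightarrow> real" where
  "prob_matrix m n P = real (card {M \<in> matrices m n. P M}) / real (card (matrices m n))"

end

theory Submission
  imports Defs "HOL-Real_Asymp.Real_Asymp"
begin

text \<open>A non-trivial zero-sum quadruple \<open>(u\<^sub>1, u\<^sub>2, u\<^sub>3, u\<^sub>1 + u\<^sub>2 + u\<^sub>3)\<close>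
  spans a \<open>3\<close>-dimensional space, so it lies in the kernel of a uniformly random
  \<open>m \<times> n\<close> matrix with probability exactly \<open>2^(-3m)\<close>; hence the mean of \<open>N\<^sub>i(C)\<close> is
  \<open>|T| 2^(-3m)\<close>, where \<open>|T| = 2^((\<psi> + 2h + o(1)) n)\<close> by superadditivity of the
  number of zero-sum quadruples and Fekete's lemma. If \<open>\<psi> < \<lambda>\<close> the mean is
  exponentially below the threshold and Markov's inequality gives the first claim.
  For the second, pairs of quadruples are grouped by the dimension of their joint span:
  pairs of full dimension \<open>6\<close> are uncorrelated, and all others together contribute at most
  \<open>2^((2h + \<lambda>) n)\<close> times the mean to the variance. Since \<open>\<psi> > \<lambda>\<close>, the
  variance is \<open>o(mean\<^sup>2)\<close>, and Chebyshev's inequality shows that \<open>N\<^sub>i(C)\<close> is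
  within a factor \<open>2\<close> of its mean with probability tending to \<open>1\<close>.\<close>

section \<open>Matrices whose kernel contains given vectors\<close>

definition parity_sign :: "nat set \<Rightarrow> nat set \<Rightarrow> real" where
  "parity_sign r x = (-1) ^ card (r \<inter> x)"

text \<open>All \<open>2^length xs\<close> subset sums of \<open>xs\<close>, with multiplicity.\<close>
fun span_list :: "nat set list \<Rightarrow> nat set list" where
  "span_list [] = [{}]"
| "span_list (x # xs) = span_list xs @ map (sdiff x) (span_list xs)"

fun independent_list :: "nat set list \<Rightarrow> bool" where
  "independent_list [] = True"
| "independent_list (x # xs) = (independent_list xs \<and> x \<notin> set (span_list xs))"

lemma sdiff_empty_right [simp]: "sdiff x {} = x"
  by (auto simp: sdiff_def)

lemma sdiff_eq_empty_iff: "sdiff x y = {} \<longleftrightarrow> x = y"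
  by (auto simp: sdiff_def)

lemma sdiff_subset: "u \<subseteq> X \<Longrightarrow> u' \<subseteq> X \<Longrightarrow> sdiff u u' \<subseteq> X"
  by (auto simp: sdiff_def)

lemma parity_sign_sdiff:
  assumes "finite r"
  shows "parity_sign r (sdiff a b) = parity_sign r a * parity_sign r b"
proof -
  have split_a: "r \<inter> a = (r \<inter> a - b) \<union> (r \<inter> a \<inter> b)"
    and split_b: "r \<inter> b = (r \<inter> b - a) \<union> (r \<inter> a \<inter> b)"
    and split_ab: "r \<inter> sdiff a b = (r \<inter> a - b) \<union> (r \<inter> b - a)"
    by (auto simp: sdiff_def)
  have "card (r \<inter> a) = card (r \<inter> a - b) + card (r \<inter> a \<inter> b)"
    "card (r \<inter> b) = card (r \<inter> b - a) + card (r \<inter> a \<inter> b)"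
    "card (r \<inter> sdiff a b) = card (r \<inter> a - b) + card (r \<inter> b - a)"
    by (subst split_a split_b split_ab, rule card_Un_disjoint; use assms in auto)+
  then show ?thesis
    unfolding parity_sign_def by (simp add: power_add)
qed

lemma parity_sign_eq_1_iff: "parity_sign r w = 1 \<longleftrightarrow> even (card (r \<inter> w))"
  by (simp add: parity_sign_def neg_one_even_power neg_one_odd_power split: if_splits)
     (metis neg_one_even_power neg_one_odd_power one_neq_neg_one)

lemma prod_one_plus_parity_sign:
  assumes "finite r"
  shows "(\<Prod>x\<leftarrow>xs. 1 + parity_sign r x) = (\<Sum>w\<leftarrow>span_list xs. parity_sign r w)"
proof (induction xs)
  case Nil
  then show ?case by (simp add: parity_sign_def)
next
  case (Cons x xs)
  have "(\<Prod>y\<leftarrow>x # xs. 1 + parity_sign r y)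
      = (\<Sum>w\<leftarrow>span_list xs. parity_sign r w) + (\<Sum>w\<leftarrow>span_list xs. parity_sign r x * parity_sign r w)"
    using Cons by (simp add: distrib_right sum_list_const_mult)
  also have "(\<Sum>w\<leftarrow>span_list xs. parity_sign r x * parity_sign r w)
      = (\<Sum>w\<leftarrow>span_list xs. parity_sign r (sdiff x w))"
    using parity_sign_sdiff[OF assms] by simp
  finally show ?case by (simp add: comp_def)
qed

lemma prod_one_plus_parity_sign_indicator:
  "(\<Prod>x\<leftarrow>xs. 1 + parity_sign r x)
     = (if \<forall>x\<in>set xs. even (card (r \<inter> x)) then 2 ^ length xs else 0)"
  by (induction xs) (auto simp: parity_sign_def)

lemma sum_parity_sign_Pow:
  assumes "finite U" "w \<subseteq> U"
  shows "(\<Sum>r\<in>Pow U. parity_sign r w) = (if w = {} then 2 ^ card U else 0)"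
proof -
  define f where "f x = (if x \<in> w then (-1::real) else 1)" for x
  have "parity_sign r w = prod f r * prod (\<lambda>_. 1) (U - r)" if "r \<subseteq> U" for r
  proof -
    have "finite r" using that assms finite_subset by blast
    then have "prod f r = prod f (r \<inter> w) * prod f (r - w)"
      by (metis prod.Int_Diff)
    then show ?thesis by (simp add: f_def parity_sign_def)
  qed
  then have "(\<Sum>r\<in>Pow U. parity_sign r w) = (\<Sum>r\<in>Pow U. prod f r * prod (\<lambda>_. 1) (U - r))"
    by (intro sum.cong) auto
  also have "\<dots> = (\<Prod>x\<in>U. f x + 1)"
    by (rule prod_add[symmetric]) (rule assms)
  also have "\<dots> = (if w = {} then 2 ^ card U else 0)"
  proof (cases "w = {}")
    case False
    then obtain x where "x \<in> w" by auto
    then have "x \<in> U" "f x + 1 = 0" using assms by (auto simp: f_def)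
    then show ?thesis using assms(1) False by (metis prod_zero_iff)
  qed (simp add: f_def)
  finally show ?thesis .
qed

lemma span_list_subset_Pow: "set xs \<subseteq> Pow U \<Longrightarrow> set (span_list xs) \<subseteq> Pow U"
  by (induction xs) (auto simp: sdiff_def)

lemma length_span_list: "length (span_list xs) = 2 ^ length xs"
  by (induction xs) auto

lemma empty_in_span_list: "{} \<in> set (span_list xs)"
  by (induction xs) auto

lemma set_subset_span_list: "set xs \<subseteq> set (span_list xs)"
proof (induction xs)
  case (Cons x xs)
  have "x \<in> sdiff x ` set (span_list xs)"
    using empty_in_span_list[of xs] by (metis image_eqI sdiff_empty_right)
  then show ?case using Cons by auto
qed simp

lemma sdiff_in_span_list:
  "w1 \<in> set (span_list G) \<Longrightarrow> w2 \<in> set (span_list G) \<Longrightarrow> sdiff w1 w2 \<in> set (span_list G)"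
proof (induction G arbitrary: w1 w2)
  case Nil
  then show ?case by (simp add: sdiff_def)
next
  case (Cons x G)
  have shift: "w \<in> set (span_list (x # G)) \<Longrightarrow>
      \<exists>v\<in>set (span_list G). w = v \<or> w = sdiff x v" for w
    by auto
  obtain v1 v2 where v: "v1 \<in> set (span_list G)" "v2 \<in> set (span_list G)"
    and w1: "w1 = v1 \<or> w1 = sdiff x v1" and w2: "w2 = v2 \<or> w2 = sdiff x v2"
    using shift[OF Cons.prems(1)] shift[OF Cons.prems(2)] by blast
  have "sdiff w1 w2 = sdiff v1 v2 \<or> sdiff w1 w2 = sdiff x (sdiff v1 v2)"
    using w1 w2 by (auto simp: sdiff_def)
  then show ?case using Cons.IH[OF v] by auto
qed

lemma independent_list_count_empty:
  "independent_list xs \<Longrightarrow> length (filter ((=) {}) (span_list xs)) = 1"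
proof (induction xs)
  case (Cons x xs)
  have "\<forall>w\<in>set (span_list xs). {} \<noteq> sdiff x w"
    using Cons.prems sdiff_eq_empty_iff[of x] by force
  then have "filter ((=) {}) (map (sdiff x) (span_list xs)) = []"
    by (simp add: filter_empty_conv)
  then show ?case using Cons by simp
qed simp

lemma sum_list_if_empty:
  "(\<Sum>w\<leftarrow>ws. if w = {} then c else 0) = (c::real) * real (length (filter ((=) {}) ws))"
  by (induction ws) (auto simp: algebra_simps)

lemma sum_sum_list_commute:
  "(\<Sum>a\<in>A. \<Sum>w\<leftarrow>ws. f a w) = (\<Sum>w\<leftarrow>ws. \<Sum>a\<in>A. f a w)"
  by (induction ws) (simp_all add: sum.distrib)

text \<open>Fourier inversion on \<open>F\<^sub>2\<^sup>U\<close>: the number of \<open>r\<close> orthogonal to all of \<open>xs\<close>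
  is governed by how often \<open>0\<close> occurs among the subset sums of \<open>xs\<close>.\<close>
lemma card_orthogonal:
  assumes "finite U" "set xs \<subseteq> Pow U"
  shows "real (card {r\<in>Pow U. \<forall>x\<in>set xs. even (card (r \<inter> x))}) * 2 ^ length xs
       = 2 ^ card U * real (length (filter ((=) {}) (span_list xs)))"
proof -
  let ?A = "{r\<in>Pow U. \<forall>x\<in>set xs. even (card (r \<inter> x))}"
  have "real (card ?A) * 2 ^ length xs
      = (\<Sum>r\<in>Pow U. if \<forall>x\<in>set xs. even (card (r \<inter> x)) then 2 ^ length xs else 0)"
    using assms(1) by (simp add: sum.inter_filter[symmetric])
  also have "\<dots> = (\<Sum>r\<in>Pow U. \<Sum>w\<leftarrow>span_list xs. parity_sign r w)"
  proof (intro sum.cong refl)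
    fix r assume "r \<in> Pow U"
    then have "finite r" using assms(1) finite_subset by blast
    then show "(if \<forall>x\<in>set xs. even (card (r \<inter> x)) then 2 ^ length xs else 0)
        = (\<Sum>w\<leftarrow>span_list xs. parity_sign r w)"
      by (simp only: prod_one_plus_parity_sign_indicator[symmetric] prod_one_plus_parity_sign)
  qed
  also have "\<dots> = (\<Sum>w\<leftarrow>span_list xs. if w = {} then 2 ^ card U else 0)"
    unfolding sum_sum_list_commute
    using span_list_subset_Pow[OF assms(2)] sum_parity_sign_Pow[OF assms(1)]
    by (intro arg_cong[where f = sum_list] map_cong) blast+
  finally show ?thesis by (simp add: sum_list_if_empty)
qed

lemma card_orthogonal_independent:
  assumes "finite U" "set xs \<subseteq> Pow U" "independent_list xs"
  shows "real (card {r\<in>Pow U. \<forall>x\<in>set xs. even (card (r \<inter> x))}) = 2 ^ card U / 2 ^ length xs"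
  using card_orthogonal[OF assms(1,2)] independent_list_count_empty[OF assms(3)]
  by (simp add: field_simps)

definition matrix_row :: "(nat \<times> nat) set \<Rightarrow> nat \<Rightarrow> nat \<Rightarrow> nat set" where
  "matrix_row M n r = {j. (r, j) \<in> M} \<inter> {..<n}"

lemma kernel_code_rows:
  "kernel_code m n M = {x. x \<subseteq> {..<n} \<and> (\<forall>r<m. even (card (matrix_row M n r \<inter> x)))}"
proof -
  have "x \<subseteq> {..<n} \<Longrightarrow> {j \<in> x. (r, j) \<in> M} = matrix_row M n r \<inter> x" for x r
    by (auto simp: matrix_row_def)
  then show ?thesis unfolding kernel_code_def by auto
qed

lemma sdiff_in_kernel_code:
  assumes "x \<in> kernel_code m n M" "y \<in> kernel_code m n M"
  shows "sdiff x y \<in> kernel_code m n M"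
proof -
  have "finite (matrix_row M n r)" for r by (simp add: matrix_row_def)
  then have "even (card (matrix_row M n r \<inter> sdiff x y))" if "r < m" for r
    using assms that by (auto simp: kernel_code_rows parity_sign_eq_1_iff[symmetric] parity_sign_sdiff)
  moreover have "sdiff x y \<subseteq> {..<n}" using assms by (auto simp: kernel_code_rows sdiff_def)
  ultimately show ?thesis by (simp add: kernel_code_rows)
qed

lemma empty_in_kernel_code: "{} \<in> kernel_code m n M"
  by (simp add: kernel_code_rows)

lemma span_list_subset_kernel_code:
  "set xs \<subseteq> kernel_code m n M \<Longrightarrow> set (span_list xs) \<subseteq> kernel_code m n M"
  by (induction xs) (auto simp: empty_in_kernel_code sdiff_in_kernel_code)

lemma card_matrices: "card (matrices m n) = 2 ^ (m * n)"
  by (simp add: matrices_def card_Pow card_cartesian_product)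

lemma finite_matrices: "finite (matrices m n)"
  by (simp add: matrices_def)

definition kernel_count :: "nat \<Rightarrow> nat \<Rightarrow> nat set list \<Rightarrow> nat" where
  "kernel_count m n xs = card {M \<in> matrices m n. set xs \<subseteq> kernel_code m n M}"

text \<open>The rows of a matrix are chosen independently, so the count factorises over the rows.\<close>
lemma kernel_count_rows:
  assumes "set xs \<subseteq> Pow {..<n}"
  shows "kernel_count m n xs = card {r\<in>Pow {..<n}. \<forall>x\<in>set xs. even (card (r \<inter> x))} ^ m"
proof -
  define A where "A = {r\<in>Pow {..<n}. \<forall>x\<in>set xs. even (card (r \<inter> x))}"
  define S where "S = {M \<in> matrices m n. set xs \<subseteq> kernel_code m n M}"
  define rows where "rows M = (\<lambda>r\<in>{..<m}. matrix_row M n r)" for M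
  define of_rows where "of_rows F = {(r, j). r < m \<and> j \<in> F r}" for F :: "nat \<Rightarrow> nat set"
  have S_rows: "S = {M \<in> matrices m n. \<forall>r<m. matrix_row M n r \<in> A}"
    using assms unfolding S_def A_def kernel_code_rows by (auto simp: matrix_row_def Int_commute)
  have "bij_betw rows S (Pi\<^sub>E {..<m} (\<lambda>_. A))"
  proof (rule bij_betw_byWitness[where f' = of_rows])
    show "\<forall>M\<in>S. of_rows (rows M) = M"
      unfolding S_rows by (auto simp: rows_def of_rows_def matrix_row_def matrices_def)
    show "\<forall>F\<in>Pi\<^sub>E {..<m} (\<lambda>_. A). rows (of_rows F) = F"
      by (auto simp: rows_def of_rows_def matrix_row_def A_def PiE_def extensional_def fun_eq_iff)
    show "rows ` S \<subseteq> Pi\<^sub>E {..<m} (\<lambda>_. A)"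
      unfolding S_rows by (auto simp: rows_def)
    have "matrix_row (of_rows F) n r = F r" if "F \<in> Pi\<^sub>E {..<m} (\<lambda>_. A)" "r < m" for F r
      using that by (auto simp: of_rows_def matrix_row_def A_def PiE_def)
    then show "of_rows ` Pi\<^sub>E {..<m} (\<lambda>_. A) \<subseteq> S"
      unfolding S_rows by (fastforce simp: of_rows_def matrices_def A_def PiE_def)
  qed
  then have "card S = card A ^ m"
    by (simp add: bij_betw_same_card card_PiE)
  then show ?thesis by (simp add: kernel_count_def S_def A_def)
qed

lemma kernel_count_independent:
  assumes "set xs \<subseteq> Pow {..<n}" "independent_list xs"
  shows "real (kernel_count m n xs) = 2 ^ (m * n) * ((1/2) ^ m) ^ length xs"
  using card_orthogonal_independent[OF _ assms(1,2)] kernel_count_rows[OF assms(1)]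
  by (simp add: power_divide power_mult[symmetric] mult.commute power_one_over)

lemma kernel_count_span_eq:
  assumes "set G \<subseteq> set ys" "set ys \<subseteq> set (span_list G)"
  shows "kernel_count m n ys = kernel_count m n G"
proof -
  have "set ys \<subseteq> kernel_code m n M \<longleftrightarrow> set G \<subseteq> kernel_code m n M" for M
    using assms span_list_subset_kernel_code[of G m n M] by blast
  then show ?thesis unfolding kernel_count_def by simp
qed

section \<open>Zero-sum quadruples in a layer\<close>

lemma finite_layer: "finite (layer n i)"
  unfolding layer_def by (rule finite_subset[of _ "Pow {..<n}"]) auto

lemma card_layer: "card (layer n i) = n choose i"
  unfolding layer_def by (subst n_subsets) auto

lemma card_layer_le_entropy:
  assumes "0 < \<gamma>" "\<gamma> < 1" and i: "real i = \<gamma> * real n"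
  shows "real (card (layer n i)) \<le> 2 powr (real n * bin_entropy \<gamma>)"
proof -
  have "i \<le> n"
    using i assms(1,2) mult_left_le_one_le[of "real n" \<gamma>] by simp
  then have "real (n choose i) * \<gamma> ^ i * (1 - \<gamma>) ^ (n - i)
      \<le> (\<Sum>k\<le>n. real (n choose k) * \<gamma> ^ k * (1 - \<gamma>) ^ (n - k))"
    using assms(1,2) by (intro member_le_sum) auto
  also have "\<dots> = 1"
    using binomial_ring[of \<gamma> "1 - \<gamma>" n] by simp
  finally have le1: "real (n choose i) * (\<gamma> ^ i * (1 - \<gamma>) ^ (n - i)) \<le> 1"
    by (simp add: mult.assoc)
  have pow_eq: "x ^ k = 2 powr (real k * log 2 x)" if "x > 0" for x :: real and k
  proof -
    have "2 powr (real k * log 2 x) = (2 powr log 2 x) powr real k"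
      by (simp add: powr_powr mult.commute)
    then show ?thesis using that by (simp add: powr_realpow)
  qed
  have "real (n - i) = (1 - \<gamma>) * real n"
    using \<open>i \<le> n\<close> i by (simp add: algebra_simps)
  then have "real i * log 2 \<gamma> + real (n - i) * log 2 (1 - \<gamma>) = - (real n * bin_entropy \<gamma>)"
    using assms(1,2) i by (simp add: bin_entropy_def log_divide algebra_simps)
  then have "\<gamma> ^ i * (1 - \<gamma>) ^ (n - i) = 2 powr (- (real n * bin_entropy \<gamma>))"
    using assms(1,2) by (simp add: pow_eq powr_add[symmetric])
  then have "real (n choose i) \<le> 1 / 2 powr (- (real n * bin_entropy \<gamma>))"
    using le1 by (simp add: field_simps)
  then show ?thesis
    by (simp add: card_layer powr_minus divide_inverse)
qed

lemma finite_zero_sum_4tuples: "finite S \<Longrightarrow> finite (zero_sum_4tuples S)"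
  by (rule finite_subset[of _ "S \<times> S \<times> S \<times> S"]) (auto simp: zero_sum_4tuples_def)

lemma card_zero_sum_4tuples_layer_pos:
  assumes "i \<le> n"
  shows "0 < card (zero_sum_4tuples (layer n i))"
proof -
  obtain u where "u \<subseteq> {..<n}" "card u = i"
    using assms by (metis card_lessThan obtain_subset_with_card_n)
  then have "(u, u, u, u) \<in> zero_sum_4tuples (layer n i)"
    by (simp add: zero_sum_4tuples_def layer_def sdiff_def)
  then show ?thesis
    using finite_zero_sum_4tuples[OF finite_layer] card_gt_0_iff by blast
qed

lemma card_zero_sum_4tuples_layer_le: "card (zero_sum_4tuples (layer n i)) \<le> 2 ^ (4 * n)"
proof -
  have "card (layer n i) \<le> card (Pow {..<n})"
    by (rule card_mono) (auto simp: layer_def)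
  then have "card (layer n i) \<le> 2 ^ n" by (simp add: card_Pow)
  have "card (zero_sum_4tuples (layer n i)) \<le> card (layer n i \<times> layer n i \<times> layer n i \<times> layer n i)"
    by (rule card_mono) (auto simp: zero_sum_4tuples_def finite_layer)
  also have "\<dots> = card (layer n i) ^ 4"
    by (simp add: card_cartesian_product power4_eq_xxxx)
  also have "\<dots> \<le> (2 ^ n) ^ 4"
    using \<open>card (layer n i) \<le> 2 ^ n\<close> by (rule power_mono) simp
  finally show ?thesis by (simp add: power_mult[symmetric] mult.commute)
qed

definition concat_vec :: "nat \<Rightarrow> nat set \<Rightarrow> nat set \<Rightarrow> nat set" where
  "concat_vec n1 u v = u \<union> (+) n1 ` v"

lemma concat_vec_layer:
  assumes "u \<in> layer n1 i1" "v \<in> layer n2 i2"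
  shows "concat_vec n1 u v \<in> layer (n1 + n2) (i1 + i2)"
proof -
  have u: "u \<subseteq> {..<n1}" "card u = i1" and v: "v \<subseteq> {..<n2}" "card v = i2"
    using assms by (auto simp: layer_def)
  then have "finite u" "finite v" "u \<inter> (+) n1 ` v = {}"
    by (auto intro: finite_subset)
  then have "card (concat_vec n1 u v) = card u + card ((+) n1 ` v)"
    unfolding concat_vec_def by (intro card_Un_disjoint) auto
  also have "card ((+) n1 ` v) = card v"
    by (rule card_image) (simp add: inj_on_def)
  finally show ?thesis
    using u v by (auto simp: layer_def concat_vec_def)
qed

lemma concat_vec_sdiff:
  assumes "u \<subseteq> {..<n1}" "u' \<subseteq> {..<n1}"
  shows "sdiff (concat_vec n1 u v) (concat_vec n1 u' v') = concat_vec n1 (sdiff u u') (sdiff v v')"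
  using assms unfolding concat_vec_def sdiff_def by auto

lemma concat_vec_inject:
  assumes "u \<subseteq> {..<n1}" "u' \<subseteq> {..<n1}" "concat_vec n1 u v = concat_vec n1 u' v'"
  shows "u = u' \<and> v = v'"
proof -
  have "concat_vec n1 u v \<inter> {..<n1} = u" "{j. n1 + j \<in> concat_vec n1 u v} = v"
    "concat_vec n1 u' v' \<inter> {..<n1} = u'" "{j. n1 + j \<in> concat_vec n1 u' v'} = v'"
    using assms(1,2) by (auto simp: concat_vec_def)
  then show ?thesis using assms(3) by simp
qed

definition concat_4tuple ::
  "nat \<Rightarrow> (nat set \<times> nat set \<times> nat set \<times> nat set) \<times> (nat set \<times> nat set \<times> nat set \<times> nat set)
     \<Rightarrow> nat set \<times> nat set \<times> nat set \<times> nat set" where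
  "concat_4tuple n1 p = (case p of ((u1, u2, u3, u4), (v1, v2, v3, v4)) \<Rightarrow>
      (concat_vec n1 u1 v1, concat_vec n1 u2 v2, concat_vec n1 u3 v3, concat_vec n1 u4 v4))"

lemma card_zero_sum_4tuples_layer_mult_le:
  "card (zero_sum_4tuples (layer n1 i1)) * card (zero_sum_4tuples (layer n2 i2))
     \<le> card (zero_sum_4tuples (layer (n1 + n2) (i1 + i2)))"
proof -
  let ?A = "zero_sum_4tuples (layer n1 i1)" and ?B = "zero_sum_4tuples (layer n2 i2)"
  let ?C = "zero_sum_4tuples (layer (n1 + n2) (i1 + i2))"
  have low: "u \<subseteq> {..<n1}" if "u \<in> layer n1 i1" for u
    using that by (simp add: layer_def)
  have maps_to: "concat_4tuple n1 p \<in> ?C" if "p \<in> ?A \<times> ?B" for p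
  proof -
    obtain u1 u2 u3 u4 v1 v2 v3 v4 where p: "p = ((u1, u2, u3, u4), (v1, v2, v3, v4))"
      by (metis prod.collapse)
    have ul: "u1 \<in> layer n1 i1" "u2 \<in> layer n1 i1" "u3 \<in> layer n1 i1" "u4 \<in> layer n1 i1"
      and vl: "v1 \<in> layer n2 i2" "v2 \<in> layer n2 i2" "v3 \<in> layer n2 i2" "v4 \<in> layer n2 i2"
      and uz: "sdiff (sdiff u1 u2) (sdiff u3 u4) = {}"
      and vz: "sdiff (sdiff v1 v2) (sdiff v3 v4) = {}"
      using that unfolding p by (auto simp: zero_sum_4tuples_def)
    have "sdiff (sdiff (concat_vec n1 u1 v1) (concat_vec n1 u2 v2))
          (sdiff (concat_vec n1 u3 v3) (concat_vec n1 u4 v4))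
        = concat_vec n1 (sdiff (sdiff u1 u2) (sdiff u3 u4)) (sdiff (sdiff v1 v2) (sdiff v3 v4))"
      using low[OF ul(1)] low[OF ul(2)] low[OF ul(3)] low[OF ul(4)]
      by (simp add: concat_vec_sdiff sdiff_subset)
    also have "\<dots> = {}" using uz vz by (simp add: concat_vec_def)
    finally show ?thesis
      unfolding p concat_4tuple_def zero_sum_4tuples_def using concat_vec_layer ul vl by auto
  qed
  have inj: "inj_on (concat_4tuple n1) (?A \<times> ?B)"
  proof (rule inj_onI)
    fix p p' assume "p \<in> ?A \<times> ?B" "p' \<in> ?A \<times> ?B" "concat_4tuple n1 p = concat_4tuple n1 p'"
    moreover obtain u1 u2 u3 u4 v1 v2 v3 v4 u1' u2' u3' u4' v1' v2' v3' v4'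
      where "p = ((u1, u2, u3, u4), (v1, v2, v3, v4))"
        and "p' = ((u1', u2', u3', u4'), (v1', v2', v3', v4'))"
      by (metis prod.collapse)
    ultimately show "p = p'"
      using concat_vec_inject[of _ n1]
      by (auto simp: concat_4tuple_def zero_sum_4tuples_def layer_def)
  qed
  have "card (concat_4tuple n1 ` (?A \<times> ?B)) \<le> card ?C"
    using maps_to by (intro card_mono finite_zero_sum_4tuples finite_layer) blast
  then show ?thesis
    using card_image[OF inj] by (simp add: card_cartesian_product)
qed

fun tuple_list :: "nat set \<times> nat set \<times> nat set \<times> nat set \<Rightarrow> nat set list" where
  "tuple_list (u1, u2, u3, u4) = [u1, u2, u3, u4]"

definition nontrivial_zero_sum :: "nat \<Rightarrow> nat \<Rightarrow> (nat set \<times> nat set \<times> nat set \<times> nat set) set" where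
  "nontrivial_zero_sum n i = {(u1, u2, u3, u4) \<in> zero_sum_4tuples (layer n i).
      u1 \<noteq> u2 \<and> u1 \<noteq> u3 \<and> u1 \<noteq> u4 \<and> u2 \<noteq> u3 \<and> u2 \<noteq> u4 \<and> u3 \<noteq> u4}"

lemma N_count_eq: "N_count n i C = card {t \<in> nontrivial_zero_sum n i. set (tuple_list t) \<subseteq> C}"
  unfolding N_count_def
  by (rule arg_cong[where f = card]) (auto simp: nontrivial_zero_sum_def zero_sum_4tuples_def)

lemma finite_nontrivial_zero_sum: "finite (nontrivial_zero_sum n i)"
  by (rule finite_subset[OF _ finite_zero_sum_4tuples[OF finite_layer]])
    (auto simp: nontrivial_zero_sum_def)

lemma card_nontrivial_zero_sum_le:
  "card (nontrivial_zero_sum n i) \<le> card (zero_sum_4tuples (layer n i))"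
  by (rule card_mono[OF finite_zero_sum_4tuples[OF finite_layer]])
    (auto simp: nontrivial_zero_sum_def)

lemma zero_sum_last_eq: "sdiff (sdiff a b) (sdiff c d) = {} \<Longrightarrow> d = sdiff a (sdiff b c)"
  by (auto simp: sdiff_def)

text \<open>A zero-sum quadruple that is not non-trivial pairs up as \<open>(a,a,b,b)\<close>, \<open>(a,b,a,b)\<close>
  or \<open>(a,b,b,a)\<close>.\<close>
lemma card_zero_sum_4tuples_layer_le_nontrivial:
  "card (zero_sum_4tuples (layer n i)) \<le> card (nontrivial_zero_sum n i) + 3 * card (layer n i) ^ 2"
proof -
  let ?L = "layer n i"
  define pairings where "pairings =
    {(\<lambda>(a, b). (a, a, b, b)) ` (?L \<times> ?L), (\<lambda>(a, b). (a, b, a, b)) ` (?L \<times> ?L),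
     (\<lambda>(a, b). (a, b, b, a)) ` (?L \<times> ?L)}"
  have "zero_sum_4tuples ?L \<subseteq> nontrivial_zero_sum n i \<union> \<Union>pairings"
  proof
    fix t assume t: "t \<in> zero_sum_4tuples ?L"
    obtain u1 u2 u3 u4 where tt: "t = (u1, u2, u3, u4)" by (metis prod.collapse)
    have L: "u1 \<in> ?L" "u2 \<in> ?L" "u3 \<in> ?L" "u4 \<in> ?L"
      and u4: "u4 = sdiff u1 (sdiff u2 u3)"
      using t zero_sum_last_eq unfolding tt zero_sum_4tuples_def by auto
    show "t \<in> nontrivial_zero_sum n i \<union> \<Union>pairings"
    proof (cases "u1 \<noteq> u2 \<and> u1 \<noteq> u3 \<and> u1 \<noteq> u4 \<and> u2 \<noteq> u3 \<and> u2 \<noteq> u4 \<and> u3 \<noteq> u4")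
      case True
      then show ?thesis using t unfolding tt nontrivial_zero_sum_def by auto
    next
      case False
      then have "(u1 = u2 \<and> u3 = u4) \<or> (u1 = u3 \<and> u2 = u4) \<or> (u1 = u4 \<and> u2 = u3)"
        using u4 by (auto simp: sdiff_def)
      then show ?thesis unfolding tt pairings_def using L by auto
    qed
  qed
  moreover have "finite (\<Union>pairings)"
    using finite_layer by (simp add: pairings_def)
  ultimately have "card (zero_sum_4tuples ?L) \<le> card (nontrivial_zero_sum n i \<union> \<Union>pairings)"
    using finite_nontrivial_zero_sum by (intro card_mono) auto
  also have "\<dots> \<le> card (nontrivial_zero_sum n i) + card (\<Union>pairings)"
    by (rule card_Un_le)
  finally have "card (zero_sum_4tuples ?L) \<le> card (nontrivial_zero_sum n i) + card (\<Union>pairings)" .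
  moreover have "card (\<Union>pairings) \<le> 3 * card ?L ^ 2"
  proof -
    have "card P \<le> card ?L ^ 2" if "P \<in> pairings" for P
      using that card_image_le[of "?L \<times> ?L"] finite_layer
      by (auto simp: pairings_def card_cartesian_product power2_eq_square)
    then have "card (\<Union>pairings) \<le> (\<Sum>P\<in>pairings. card ?L ^ 2)"
      by (intro order_trans[OF card_Union_le_sum_card] sum_mono) (auto simp: pairings_def)
    also have "\<dots> \<le> 3 * card ?L ^ 2"
      by (simp add: pairings_def card_insert_if)
    finally show ?thesis .
  qed
  ultimately show ?thesis by linarith
qed

lemma nontrivial_zero_sum_independent:
  assumes "(u1, u2, u3, u4) \<in> nontrivial_zero_sum n i" "i \<ge> 1"
  shows "independent_list [u1, u2, u3]" and "u4 = sdiff u1 (sdiff u2 u3)"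
    and "{u1, u2, u3, u4} \<subseteq> Pow {..<n}"
proof -
  have L: "u1 \<in> layer n i" "u2 \<in> layer n i" "u3 \<in> layer n i" "u4 \<in> layer n i"
    and z: "sdiff (sdiff u1 u2) (sdiff u3 u4) = {}"
    and d: "u1 \<noteq> u2" "u1 \<noteq> u3" "u2 \<noteq> u3" "u3 \<noteq> u4"
    using assms(1) by (auto simp: nontrivial_zero_sum_def zero_sum_4tuples_def)
  have nonzero: "x \<noteq> {}" if "x \<in> layer n i" for x
    using that assms(2) by (auto simp: layer_def)
  show u4: "u4 = sdiff u1 (sdiff u2 u3)"
    using zero_sum_last_eq[OF z] .
  show "{u1, u2, u3, u4} \<subseteq> Pow {..<n}"
    using L by (auto simp: layer_def)
  have "u1 \<noteq> sdiff u2 u3"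
    using nonzero[OF L(4)] u4 by (auto simp: sdiff_def)
  then show "independent_list [u1, u2, u3]"
    using nonzero[OF L(1)] nonzero[OF L(2)] nonzero[OF L(3)] d by auto
qed

lemma tuple_list_subset_span_list:
  assumes "(u1, u2, u3, u4) \<in> nontrivial_zero_sum n i" "i \<ge> 1"
    and "{u1, u2, u3} \<subseteq> set (span_list G)"
  shows "set (tuple_list (u1, u2, u3, u4)) \<subseteq> set (span_list G)"
  using assms(3) nontrivial_zero_sum_independent(2)[OF assms(1,2)]
  by (auto intro!: sdiff_in_span_list)

section \<open>Existence of the limit \<open>\<psi>(4,\<gamma>)\<close>\<close>

lemma superadditive_mult_add_le:
  fixes a :: "nat \<Rightarrow> real"
  assumes "\<And>k l. a k + a l \<le> a (k + l)"
  shows "real s * a K + a r \<le> a (s * K + r)"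
proof (induction s)
  case (Suc s)
  have "a K + a (s * K + r) \<le> a (K + (s * K + r))" by (rule assms)
  then show ?case using Suc by (simp add: algebra_simps)
qed simp

lemma superadditive_quotient_lower_bound:
  fixes a :: "nat \<Rightarrow> real"
  assumes sup: "\<And>k l. a k + a l \<le> a (k + l)" and "K \<ge> 1"
  obtains D where "\<And>k. k \<ge> 1 \<Longrightarrow> a K / real K - D / real k \<le> a k / real k"
proof
  define c where "c = Min (a ` {..<K})"
  fix k :: nat assume "k \<ge> 1"
  define s where "s = k div K"
  define r where "r = k mod K"
  have r: "r < K" "k = s * K + r"
    using \<open>K \<ge> 1\<close> unfolding s_def r_def by simp_all
  then have "c \<le> a r" unfolding c_def by (intro Min_le) auto
  have "real r * (a K / real K) \<le> real r * \<bar>a K / real K\<bar>"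
    by (intro mult_left_mono abs_ge_self) auto
  also have "\<dots> \<le> real K * \<bar>a K / real K\<bar>"
    using r(1) by (intro mult_right_mono) auto
  also have "real K * \<bar>a K / real K\<bar> = \<bar>a K\<bar>"
    using \<open>K \<ge> 1\<close> by (simp add: abs_divide)
  finally have "real r * (a K / real K) \<le> \<bar>a K\<bar>" .
  moreover have "real k * (a K / real K) = real s * a K + real r * (a K / real K)"
    using r(2) \<open>K \<ge> 1\<close> by (simp add: field_simps)
  moreover have "real s * a K + a r \<le> a k"
    using superadditive_mult_add_le[OF sup, of s K r] r(2) by simp
  ultimately have "real k * (a K / real K) - (\<bar>a K\<bar> + \<bar>c\<bar>) \<le> a k"
    using \<open>c \<le> a r\<close> abs_ge_minus_self[of c] by linarith
  then have "(real k * (a K / real K) - (\<bar>a K\<bar> + \<bar>c\<bar>)) / real k \<le> a k / real k"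
    by (intro divide_right_mono) auto
  then show "a K / real K - (\<bar>a K\<bar> + \<bar>c\<bar>) / real k \<le> a k / real k"
    using \<open>k \<ge> 1\<close> by (simp add: diff_divide_distrib)
qed

lemma superadditive_quotient_tendsto_Sup:
  fixes a :: "nat \<Rightarrow> real"
  assumes sup: "\<And>k l. a k + a l \<le> a (k + l)" and bound: "\<And>k. a k \<le> B * real k"
  defines "\<sigma> \<equiv> (SUP k\<in>{1..}. a k / real k)"
  shows "\<And>k. k \<ge> 1 \<Longrightarrow> a k / real k \<le> \<sigma>" and "(\<lambda>k. a k / real k) \<longlonglongrightarrow> \<sigma>"
proof -
  have bdd: "bdd_above ((\<lambda>k. a k / real k) ` {1..})"
    using bound by (intro bdd_aboveI2[of _ _ B]) (simp add: divide_le_eq mult.commute)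
  show upper: "a k / real k \<le> \<sigma>" if "k \<ge> 1" for k
    unfolding \<sigma>_def by (rule cSUP_upper[OF _ bdd]) (use that in auto)
  show "(\<lambda>k. a k / real k) \<longlonglongrightarrow> \<sigma>"
  proof (rule LIMSEQ_I)
    fix \<epsilon> :: real assume "0 < \<epsilon>"
    then obtain K where K: "K \<ge> 1" "\<sigma> - \<epsilon> / 2 < a K / real K"
      using less_cSUP_iff[OF _ bdd, of "\<sigma> - \<epsilon> / 2"] unfolding \<sigma>_def by force
    obtain D where D: "\<And>k. k \<ge> 1 \<Longrightarrow> a K / real K - D / real k \<le> a k / real k"
      using superadditive_quotient_lower_bound[OF sup K(1)] by blast
    obtain N :: nat where N: "real N > 2 * \<bar>D\<bar> / \<epsilon>"
      using reals_Archimedean2 by blast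
    have "norm (a k / real k - \<sigma>) < \<epsilon>" if "k \<ge> N + 1" for k
    proof -
      have "real N < real k" using that by simp
      then have "2 * \<bar>D\<bar> / \<epsilon> < real k" using N by linarith
      then have "2 * \<bar>D\<bar> < real k * \<epsilon>"
        using \<open>0 < \<epsilon>\<close> by (simp add: field_simps)
      then have "D / real k < \<epsilon> / 2"
        using that by (simp add: field_simps)
      then show ?thesis
        using D[of k] upper[of k] K that by auto
    qed
    then show "\<exists>N. \<forall>k\<ge>N. norm (a k / real k - \<sigma>) < \<epsilon>" by blast
  qed
qed

lemma tendsto_inf_multiples:
  fixes f :: "nat \<Rightarrow> 'a :: metric_space"
  assumes "q > 0" "(\<lambda>k. f (k * q)) \<longlonglongrightarrow> L"
  shows "(f \<longlongrightarrow> L) (inf at_top (principal {n. q dvd n}))"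
proof (rule tendstoI)
  fix e :: real assume "e > 0"
  then obtain K where K: "\<And>k. k \<ge> K \<Longrightarrow> dist (f (k * q)) L < e"
    using assms(2) unfolding LIMSEQ_def by blast
  have "dist (f n) L < e" if "n \<ge> K * q" "q dvd n" for n
  proof -
    obtain c where "n = q * c"
      using \<open>q dvd n\<close> by (rule dvdE)
    then have c: "n = c * q" by simp
    then have "c \<ge> K" using that(1) assms(1) by simp
    then show ?thesis using K c by simp
  qed
  then show "eventually (\<lambda>n. dist (f n) L < e) (inf at_top (principal {n. q dvd n}))"
    unfolding eventually_inf_principal eventually_at_top_linorder by blast
qed

lemma inf_at_top_multiples_neq_bot:
  assumes "q > 0"
  shows "inf at_top (principal {n :: nat. q dvd n}) \<noteq> bot"
proof
  assume "inf at_top (principal {n. q dvd n}) = bot"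
  then obtain N where "\<And>n. n \<ge> N \<Longrightarrow> \<not> q dvd n"
    unfolding trivial_limit_def eventually_inf_principal eventually_at_top_linorder by auto
  moreover have "N \<le> N * q" "q dvd N * q"
    using assms by simp_all
  ultimately show False by blast
qed

definition int_mult_set :: "real \<Rightarrow> nat set" where
  "int_mult_set x = {n. \<exists>k::nat. real k = x * real n}"

lemma int_mult_filter_eq: "int_mult_filter x = inf at_top (principal (int_mult_set x))"
  unfolding int_mult_filter_def int_mult_set_def ..

lemma int_mult_set_floor: "n \<in> int_mult_set x \<Longrightarrow> real (nat \<lfloor>x * real n\<rfloor>) = x * real n"
proof -
  assume "n \<in> int_mult_set x"
  then obtain k :: nat where k: "real k = x * real n" unfolding int_mult_set_def by auto
  then have "\<lfloor>x * real n\<rfloor> = int k" unfolding k[symmetric] by simp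
  then show ?thesis using k by simp
qed

lemma zero_in_int_mult_set: "0 \<in> int_mult_set x"
  unfolding int_mult_set_def by (auto intro: exI[of _ 0])

lemma int_mult_set_add:
  assumes "a \<in> int_mult_set x" "b \<in> int_mult_set x"
  shows "a + b \<in> int_mult_set x"
proof -
  obtain ka kb :: nat where "real ka = x * real a" "real kb = x * real b"
    using assms unfolding int_mult_set_def by auto
  then have "real (ka + kb) = x * real (a + b)" by (simp add: distrib_left)
  then show ?thesis unfolding int_mult_set_def by blast
qed

lemma int_mult_set_mult: "a \<in> int_mult_set x \<Longrightarrow> k * a \<in> int_mult_set x"
  by (induction k) (simp_all add: zero_in_int_mult_set int_mult_set_add)

lemma int_mult_set_diff:
  assumes "a \<in> int_mult_set x" "b \<in> int_mult_set x" "b \<le> a" "0 \<le> x"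
  shows "a - b \<in> int_mult_set x"
proof -
  obtain ka kb :: nat where k: "real ka = x * real a" "real kb = x * real b"
    using assms unfolding int_mult_set_def by auto
  moreover have "x * real b \<le> x * real a"
    using assms(3,4) by (simp add: mult_left_mono)
  ultimately have "real (ka - kb) = x * real (a - b)"
    using assms(3) by (simp add: of_nat_diff algebra_simps)
  then show ?thesis unfolding int_mult_set_def by blast
qed

text \<open>For \<open>x \<ge> 0\<close> the \<open>n\<close> with \<open>x n\<close> integral are closed under sums and differences,
  hence are the multiples of the least positive one.\<close>
lemma int_mult_set_eq_multiples:
  assumes "0 \<le> x" "n0 \<in> int_mult_set x" "n0 > 0"
  obtains q where "q > 0" "int_mult_set x = {n. q dvd n}"
proof
  define q where "q = (LEAST n. 0 < n \<and> n \<in> int_mult_set x)"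
  have q: "0 < q" "q \<in> int_mult_set x"
    using LeastI[of "\<lambda>n. 0 < n \<and> n \<in> int_mult_set x" n0] assms unfolding q_def by auto
  have least: "q \<le> n" if "n \<in> int_mult_set x" "0 < n" for n
    unfolding q_def by (rule Least_le) (use that in simp)
  show "q > 0" by (rule q(1))
  have "n \<in> int_mult_set x \<longleftrightarrow> q dvd n" for n
  proof
    assume n: "n \<in> int_mult_set x"
    have "n - n div q * q \<in> int_mult_set x"
      using n assms(1) int_mult_set_mult[OF q(2)] by (intro int_mult_set_diff) auto
    then have "n mod q \<in> int_mult_set x" by (simp add: minus_div_mult_eq_mod)
    moreover have "n mod q < q" using q(1) by simp
    ultimately have "n mod q = 0" using least by (meson not_le not_gr0)
    then show "q dvd n" by auto
  next
    assume "q dvd n"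
    then obtain c where "n = q * c" by (rule dvdE)
    then show "n \<in> int_mult_set x"
      using int_mult_set_mult[OF q(2), of c] by (simp add: mult.commute)
  qed
  then show "int_mult_set x = {n. q dvd n}" by auto
qed

lemma card_zero_sum_4tuples_layer_mult_le_int_mult:
  assumes "n1 \<in> int_mult_set \<gamma>" "n2 \<in> int_mult_set \<gamma>"
  shows "card (zero_sum_4tuples (layer n1 (nat \<lfloor>\<gamma> * real n1\<rfloor>)))
      * card (zero_sum_4tuples (layer n2 (nat \<lfloor>\<gamma> * real n2\<rfloor>)))
    \<le> card (zero_sum_4tuples (layer (n1 + n2) (nat \<lfloor>\<gamma> * real (n1 + n2)\<rfloor>)))"
proof -
  have "real (nat \<lfloor>\<gamma> * real (n1 + n2)\<rfloor>)
      = real (nat \<lfloor>\<gamma> * real n1\<rfloor>) + real (nat \<lfloor>\<gamma> * real n2\<rfloor>)"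
    using int_mult_set_floor[OF assms(1)] int_mult_set_floor[OF assms(2)]
      int_mult_set_floor[OF int_mult_set_add[OF assms]]
    by (simp add: algebra_simps)
  then have "nat \<lfloor>\<gamma> * real (n1 + n2)\<rfloor> = nat \<lfloor>\<gamma> * real n1\<rfloor> + nat \<lfloor>\<gamma> * real n2\<rfloor>"
    by linarith
  then show ?thesis
    using card_zero_sum_4tuples_layer_mult_le by simp
qed

definition zero_sum_rate :: "real \<Rightarrow> nat \<Rightarrow> real" where
  "zero_sum_rate \<gamma> n = log 2 (real (card (zero_sum_4tuples (layer n (nat \<lfloor>\<gamma> * real n\<rfloor>))))) / real n"

lemma floor_mult_le:
  assumes "0 \<le> \<gamma>" "\<gamma> \<le> 1"
  shows "nat \<lfloor>\<gamma> * real n\<rfloor> \<le> n"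
  using assms mult_left_le_one_le[of "real n" \<gamma>] by linarith

lemma zero_sum_rate_limit:
  assumes "0 \<le> \<gamma>" "\<gamma> \<le> 1" "n0 \<in> int_mult_set \<gamma>" "n0 > 0"
  shows "(zero_sum_rate \<gamma> \<longlongrightarrow> psi4 \<gamma> + 2 * bin_entropy \<gamma>) (int_mult_filter \<gamma>)"
    and "\<And>n. n \<in> int_mult_set \<gamma> \<Longrightarrow> n > 0 \<Longrightarrow> zero_sum_rate \<gamma> n \<le> psi4 \<gamma> + 2 * bin_entropy \<gamma>"
proof -
  obtain q where q: "q > 0" "int_mult_set \<gamma> = {n. q dvd n}"
    using int_mult_set_eq_multiples assms by blast
  define T where "T n = card (zero_sum_4tuples (layer n (nat \<lfloor>\<gamma> * real n\<rfloor>)))" for n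
  define a where "a k = log 2 (real (T (k * q)))" for k
  have T_pos: "0 < T n" for n
    unfolding T_def using assms(1,2) by (intro card_zero_sum_4tuples_layer_pos floor_mult_le)
  have superadditive: "a k + a l \<le> a (k + l)" for k l
  proof -
    have "T (k * q) * T (l * q) \<le> T ((k + l) * q)"
      unfolding T_def add_mult_distrib using q
      by (intro card_zero_sum_4tuples_layer_mult_le_int_mult) auto
    then have "real (T (k * q)) * real (T (l * q)) \<le> real (T ((k + l) * q))"
      by (metis of_nat_le_iff of_nat_mult)
    then have "log 2 (real (T (k * q)) * real (T (l * q))) \<le> log 2 (real (T ((k + l) * q)))"
      using T_pos by (intro log_mono) auto
    then show ?thesis
      unfolding a_def using T_pos by (simp add: log_mult)
  qed
  have bound: "a k \<le> real (4 * q) * real k" for k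
  proof -
    have "real (T (k * q)) \<le> 2 ^ (4 * (k * q))"
      unfolding T_def using card_zero_sum_4tuples_layer_le
      by (metis of_nat_le_iff of_nat_numeral of_nat_power)
    then have "a k \<le> log 2 (2 ^ (4 * (k * q)))"
      unfolding a_def using T_pos by (intro log_mono) auto
    then show ?thesis by (simp add: log_nat_power algebra_simps)
  qed
  define \<sigma> where "\<sigma> = (SUP k\<in>{1..}. a k / real k)"
  note fekete = superadditive_quotient_tendsto_Sup[OF superadditive bound, folded \<sigma>_def]
  note sup = fekete(1) and lim_a = fekete(2)
  have rate: "zero_sum_rate \<gamma> (k * q) = a k / real k / real q" for k
    unfolding zero_sum_rate_def a_def T_def by simp
  have "(\<lambda>k. zero_sum_rate \<gamma> (k * q)) \<longlonglongrightarrow> \<sigma> / real q"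
    unfolding rate by (intro tendsto_divide lim_a) (use q in auto)
  then have lim: "(zero_sum_rate \<gamma> \<longlongrightarrow> \<sigma> / real q) (int_mult_filter \<gamma>)"
    unfolding int_mult_filter_eq q(2) by (rule tendsto_inf_multiples[OF q(1)])
  moreover have "int_mult_filter \<gamma> \<noteq> bot"
    unfolding int_mult_filter_eq q(2) by (rule inf_at_top_multiples_neq_bot[OF q(1)])
  ultimately have psi: "psi4 \<gamma> + 2 * bin_entropy \<gamma> = \<sigma> / real q"
    using tendsto_Lim unfolding psi4_def zero_sum_rate_def by fastforce
  show "(zero_sum_rate \<gamma> \<longlongrightarrow> psi4 \<gamma> + 2 * bin_entropy \<gamma>) (int_mult_filter \<gamma>)"
    unfolding psi using lim .
  show "zero_sum_rate \<gamma> n \<le> psi4 \<gamma> + 2 * bin_entropy \<gamma>" if "n \<in> int_mult_set \<gamma>" "n > 0" for n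
  proof -
    have "q dvd n" using that q(2) by simp
    then obtain k where "n = q * k" by (rule dvdE)
    then have k: "n = k * q" "k \<ge> 1"
      using that(2) by (simp_all add: mult.commute Suc_le_eq)
    then show ?thesis
      unfolding psi k(1) rate using sup[OF k(2)] q(1) by (intro divide_right_mono) auto
  qed
qed

section \<open>First and second moments of \<open>N\<^sub>i(C)\<close>\<close>

definition extend_basis :: "nat set list \<Rightarrow> nat set \<Rightarrow> nat set list" where
  "extend_basis B x = (if x \<in> set (span_list B) then B else x # B)"

lemma independent_extend_basis: "independent_list B \<Longrightarrow> independent_list (extend_basis B x)"
  by (simp add: extend_basis_def)

lemma extend_basis_subset_Pow: "set B \<subseteq> Pow U \<Longrightarrow> x \<subseteq> U \<Longrightarrow> set (extend_basis B x) \<subseteq> Pow U"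
  by (auto simp: extend_basis_def)

lemma span_list_extend_basis_mono: "set (span_list B) \<subseteq> set (span_list (extend_basis B x))"
  by (auto simp: extend_basis_def)

lemma in_span_list_extend_basis: "x \<in> set (span_list (extend_basis B x))"
  using set_subset_span_list[of "x # B"] by (auto simp: extend_basis_def)

lemma set_extend_basis: "set (extend_basis B x) \<subseteq> insert x (set B)"
  by (auto simp: extend_basis_def)

lemma length_extend_basis: "length (extend_basis B x) \<le> Suc (length B)"
  by (simp add: extend_basis_def)

text \<open>Two non-trivial quadruples whose eight vectors span a space of full dimension \<open>6\<close>
  are uncorrelated, so only the lower ranks contribute to the variance.\<close>
definition capped_power :: "real \<Rightarrow> nat \<Rightarrow> real" where
  "capped_power P s = (if s < 6 then P ^ s else 0)"

fun extension_weight :: "nat set set \<Rightarrow> real \<Rightarrow> nat \<Rightarrow> nat set list \<Rightarrow> real" where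
  "extension_weight L P 0 B = capped_power P (length B)"
| "extension_weight L P (Suc k) B = (\<Sum>x\<in>L. extension_weight L P k (extend_basis B x))"

text \<open>Each vector of \<open>L\<close> either lies in the current span (at most \<open>2^s\<close> of them) or
  raises the dimension \<open>s\<close> by one.\<close>
fun extension_weight_bound :: "real \<Rightarrow> real \<Rightarrow> nat \<Rightarrow> nat \<Rightarrow> real" where
  "extension_weight_bound P l 0 s = capped_power P s"
| "extension_weight_bound P l (Suc k) s =
     2 ^ s * extension_weight_bound P l k s + l * extension_weight_bound P l k (Suc s)"

lemma extension_weight_bound_nonneg: "0 \<le> P \<Longrightarrow> 0 \<le> l \<Longrightarrow> 0 \<le> extension_weight_bound P l k s"
  by (induction k arbitrary: s) (auto simp: capped_power_def)

lemma extension_weight_le: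
  assumes "finite L" "0 \<le> P" "independent_list B"
  shows "extension_weight L P k B \<le> extension_weight_bound P (card L) k (length B)"
  using assms(3)
proof (induction k arbitrary: B)
  case (Suc k)
  let ?S = "set (span_list B)" and ?s = "length B"
  let ?w = "extension_weight_bound P (card L)"
  have "extension_weight L P (Suc k) B
      = (\<Sum>x\<in>L \<inter> ?S. extension_weight L P k B) + (\<Sum>x\<in>L - ?S. extension_weight L P k (x # B))"
    using assms(1) by (simp add: sum.Int_Diff[of L _ ?S] extend_basis_def)
  also have "\<dots> \<le> (\<Sum>x\<in>L \<inter> ?S. ?w k ?s) + (\<Sum>x\<in>L - ?S. ?w k (Suc ?s))"
  proof (intro add_mono sum_mono)
    show "extension_weight L P k B \<le> ?w k ?s" by (rule Suc.IH[OF Suc.prems])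
    show "extension_weight L P k (x # B) \<le> ?w k (Suc ?s)" if "x \<in> L - ?S" for x
      using Suc.IH[of "x # B"] Suc.prems that by simp
  qed
  also have "\<dots> = card (L \<inter> ?S) * ?w k ?s + card (L - ?S) * ?w k (Suc ?s)"
    by simp
  also have "\<dots> \<le> 2 ^ ?s * ?w k ?s + card L * ?w k (Suc ?s)"
  proof (intro add_mono mult_right_mono)
    have "card (L \<inter> ?S) \<le> length (span_list B)"
      by (rule order_trans[OF card_mono card_length]) auto
    then show "real (card (L \<inter> ?S)) \<le> 2 ^ ?s"
      by (simp add: length_span_list)
    show "real (card (L - ?S)) \<le> real (card L)"
      using assms(1) by (simp add: card_mono)
  qed (use extension_weight_bound_nonneg[OF assms(2)] in auto)
  finally show ?case by simp
qed simp

lemma extension_weight_bound_3_3: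
  "extension_weight_bound P l 3 3 = 512 * P ^ 3 + 448 * l * P ^ 4 + 56 * l^2 * P ^ 5"
  by (simp add: numeral_eq_Suc capped_power_def algebra_simps power2_eq_square)

lemma extension_weight_3:
  "extension_weight L P 3 B = (\<Sum>(a, b, c)\<in>L \<times> L \<times> L.
     capped_power P (length (extend_basis (extend_basis (extend_basis B a) b) c)))"
  by (simp add: numeral_3_eq_3 sum.cartesian_product')

lemma sum_card_filter_commute:
  assumes "finite A" "finite B"
  shows "(\<Sum>a\<in>A. card {b\<in>B. P a b}) = (\<Sum>b\<in>B. card {a\<in>A. P a b})"
proof -
  have count: "card {x\<in>X. Q x} = (\<Sum>x\<in>X. if Q x then 1 else 0)"
    if "finite X" for X and Q :: "_ \<Rightarrow> bool"
  proof -
    have "card {x\<in>X. Q x} = (\<Sum>x\<in>{x\<in>X. Q x}. 1)" by simp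
    also have "\<dots> = (\<Sum>x\<in>X. if Q x then 1 else 0)" by (rule sum.inter_filter[OF that])
    finally show ?thesis .
  qed
  have "(\<Sum>a\<in>A. card {b\<in>B. P a b}) = (\<Sum>a\<in>A. \<Sum>b\<in>B. if P a b then 1 else 0)"
    using count[OF assms(2)] by simp
  also have "\<dots> = (\<Sum>b\<in>B. \<Sum>a\<in>A. if P a b then 1 else 0)"
    by (rule sum.swap)
  also have "\<dots> = (\<Sum>b\<in>B. card {a\<in>A. P a b})"
    using count[OF assms(1)] by simp
  finally show ?thesis .
qed

lemma sum_N_count:
  "(\<Sum>M\<in>matrices m n. N_count n i (kernel_code m n M))
     = (\<Sum>t\<in>nontrivial_zero_sum n i. kernel_count m n (tuple_list t))"
  unfolding N_count_eq kernel_count_def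
  by (rule sum_card_filter_commute[OF finite_matrices finite_nontrivial_zero_sum])

lemma sum_N_count_squared:
  "(\<Sum>M\<in>matrices m n. N_count n i (kernel_code m n M) ^ 2)
     = (\<Sum>t\<in>nontrivial_zero_sum n i. \<Sum>t'\<in>nontrivial_zero_sum n i.
          kernel_count m n (tuple_list t @ tuple_list t'))"
proof -
  let ?T = "nontrivial_zero_sum n i"
  have "N_count n i (kernel_code m n M) ^ 2
      = card {p \<in> ?T \<times> ?T. set (tuple_list (fst p) @ tuple_list (snd p)) \<subseteq> kernel_code m n M}" for M
  proof -
    have "{p \<in> ?T \<times> ?T. set (tuple_list (fst p) @ tuple_list (snd p)) \<subseteq> kernel_code m n M}
        = {t \<in> ?T. set (tuple_list t) \<subseteq> kernel_code m n M} \<times> {t \<in> ?T. set (tuple_list t) \<subseteq> kernel_code m n M}"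
      by auto
    then show ?thesis
      by (simp add: N_count_eq card_cartesian_product power2_eq_square)
  qed
  then have "(\<Sum>M\<in>matrices m n. N_count n i (kernel_code m n M) ^ 2)
      = (\<Sum>p\<in>?T \<times> ?T. kernel_count m n (tuple_list (fst p) @ tuple_list (snd p)))"
    unfolding kernel_count_def
    by (simp only: sum_card_filter_commute[OF finite_matrices finite_cartesian_product[OF
          finite_nontrivial_zero_sum finite_nontrivial_zero_sum]])
  then show ?thesis
    by (simp add: sum.cartesian_product split_beta)
qed

lemma kernel_count_nontrivial:
  assumes "t \<in> nontrivial_zero_sum n i" "i \<ge> 1"
  shows "real (kernel_count m n (tuple_list t)) = 2 ^ (m * n) * ((1/2) ^ m) ^ 3"
proof -
  obtain u1 u2 u3 u4 where t: "t = (u1, u2, u3, u4)" by (metis prod.collapse)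
  note indep = nontrivial_zero_sum_independent[OF assms(1)[unfolded t] assms(2)]
  have "{u1, u2, u3} \<subseteq> set (span_list [u1, u2, u3])"
    using set_subset_span_list[of "[u1, u2, u3]"] by simp
  then have "kernel_count m n (tuple_list t) = kernel_count m n [u1, u2, u3]"
    unfolding t
    by (intro kernel_count_span_eq tuple_list_subset_span_list[OF assms(1)[unfolded t] assms(2)]) auto
  then show ?thesis
    using kernel_count_independent[of "[u1, u2, u3]" n m] indep by (simp add: power3_eq_cube)
qed

text \<open>The kernel condition for a pair of quadruples only depends on a basis of their span,
  obtained by greedily extending the basis \<open>[u\<^sub>1, u\<^sub>2, u\<^sub>3]\<close> of the first one.\<close>
lemma kernel_count_pair:
  assumes t: "(u1, u2, u3, u4) \<in> nontrivial_zero_sum n i"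
    and t': "(a, b, c, d) \<in> nontrivial_zero_sum n i" and i: "i \<ge> 1"
  defines "G \<equiv> extend_basis (extend_basis (extend_basis [u1, u2, u3] a) b) c"
  shows "real (kernel_count m n (tuple_list (u1, u2, u3, u4) @ tuple_list (a, b, c, d)))
           = 2 ^ (m * n) * ((1/2) ^ m) ^ length G"
    and "length G \<le> 6"
proof -
  let ?B = "[u1, u2, u3]"
  note indep = nontrivial_zero_sum_independent[OF t i]
  note indep' = nontrivial_zero_sum_independent[OF t' i]
  let ?Ba = "extend_basis ?B a" and ?Bab = "extend_basis (extend_basis ?B a) b"
  have m1: "set (span_list ?B) \<subseteq> set (span_list ?Ba)"
    and m2: "set (span_list ?Ba) \<subseteq> set (span_list ?Bab)"
    and m3: "set (span_list ?Bab) \<subseteq> set (span_list G)"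
    unfolding G_def by (rule span_list_extend_basis_mono)+
  have "{u1, u2, u3} \<subseteq> set (span_list G)"
    using set_subset_span_list[of ?B] m1 m2 m3 by auto
  moreover have "{a, b, c} \<subseteq> set (span_list G)"
    using in_span_list_extend_basis[of a ?B] in_span_list_extend_basis[of b ?Ba]
      in_span_list_extend_basis[of c ?Bab] m2 m3
    unfolding G_def by blast
  moreover have "set G \<subseteq> {c, b, a, u1, u2, u3}"
    using set_extend_basis[of ?B a] set_extend_basis[of ?Ba b] set_extend_basis[of ?Bab c]
    unfolding G_def by auto
  ultimately have "kernel_count m n (tuple_list (u1, u2, u3, u4) @ tuple_list (a, b, c, d))
      = kernel_count m n G"
    using tuple_list_subset_span_list[OF t i] tuple_list_subset_span_list[OF t' i]
    by (intro kernel_count_span_eq) (simp_all, blast)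
  moreover have "independent_list G"
    unfolding G_def using indep(1) by (intro independent_extend_basis)
  moreover have "set G \<subseteq> Pow {..<n}"
    unfolding G_def using indep(3) indep'(3) by (intro extend_basis_subset_Pow) auto
  ultimately show "real (kernel_count m n (tuple_list (u1, u2, u3, u4) @ tuple_list (a, b, c, d)))
      = 2 ^ (m * n) * ((1/2) ^ m) ^ length G"
    using kernel_count_independent[of G n m] by simp
  show "length G \<le> 6"
    using length_extend_basis[of ?B a] length_extend_basis[of ?Ba b] length_extend_basis[of ?Bab c]
    unfolding G_def by simp
qed

fun first_three :: "nat set \<times> nat set \<times> nat set \<times> nat set \<Rightarrow> nat set \<times> nat set \<times> nat set" where
  "first_three (a, b, c, d) = (a, b, c)"

lemma inj_on_first_three: "i \<ge> 1 \<Longrightarrow> inj_on first_three (nontrivial_zero_sum n i)"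
proof (rule inj_onI)
  fix x y assume "i \<ge> 1" "x \<in> nontrivial_zero_sum n i" "y \<in> nontrivial_zero_sum n i"
    "first_three x = first_three y"
  moreover obtain a b c d a' b' c' d' where "x = (a, b, c, d)" "y = (a', b', c', d')"
    by (metis prod.collapse)
  ultimately show "x = y"
    using nontrivial_zero_sum_independent(2)[of a b c d n i]
      nontrivial_zero_sum_independent(2)[of a' b' c' d' n i] by simp
qed

lemma sum_kernel_count_pair_le:
  assumes t: "(u1, u2, u3, u4) \<in> nontrivial_zero_sum n i" and i: "i \<ge> 1"
  shows "(\<Sum>t'\<in>nontrivial_zero_sum n i.
           real (kernel_count m n (tuple_list (u1, u2, u3, u4) @ tuple_list t'))
           - 2 ^ (m * n) * ((1/2) ^ m) ^ 6)
     \<le> 2 ^ (m * n) * extension_weight (layer n i) ((1/2) ^ m) 3 [u1, u2, u3]"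
proof -
  define Z :: real where "Z = 2 ^ (m * n)"
  define P :: real where "P = (1/2) ^ m"
  define g where "g = (\<lambda>(a, b, c).
    Z * capped_power P (length (extend_basis (extend_basis (extend_basis [u1, u2, u3] a) b) c)))"
  have g_nonneg: "0 \<le> g x" for x
    unfolding g_def Z_def P_def by (auto simp: capped_power_def split: prod.splits)
  have "real (kernel_count m n (tuple_list (u1, u2, u3, u4) @ tuple_list t')) - Z * P ^ 6
      \<le> g (first_three t')" if "t' \<in> nontrivial_zero_sum n i" for t'
  proof -
    obtain a b c d where t': "t' = (a, b, c, d)" by (metis prod.collapse)
    let ?G = "extend_basis (extend_basis (extend_basis [u1, u2, u3] a) b) c"
    note pair = kernel_count_pair[OF t that[unfolded t'] i]
    have "Z * P ^ length ?G - Z * P ^ 6 \<le> Z * capped_power P (length ?G)"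
      using pair(2) unfolding capped_power_def Z_def P_def by (cases "length ?G < 6") auto
    then show ?thesis
      using pair(1) unfolding t' g_def Z_def P_def by simp
  qed
  then have "(\<Sum>t'\<in>nontrivial_zero_sum n i.
      real (kernel_count m n (tuple_list (u1, u2, u3, u4) @ tuple_list t')) - Z * P ^ 6)
      \<le> (\<Sum>t'\<in>nontrivial_zero_sum n i. g (first_three t'))"
    by (rule sum_mono)
  also have "\<dots> = (\<Sum>x\<in>first_three ` nontrivial_zero_sum n i. g x)"
    by (simp add: sum.reindex[OF inj_on_first_three[OF i]])
  also have "\<dots> \<le> (\<Sum>x\<in>layer n i \<times> layer n i \<times> layer n i. g x)"
    by (intro sum_mono2 g_nonneg)
      (auto simp: finite_layer nontrivial_zero_sum_def zero_sum_4tuples_def)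
  also have "\<dots> = Z * extension_weight (layer n i) P 3 [u1, u2, u3]"
    unfolding extension_weight_3 sum_distrib_left g_def by (simp add: split_beta)
  finally show ?thesis unfolding Z_def P_def .
qed

lemma sum_N_count_real:
  assumes "i \<ge> 1"
  shows "(\<Sum>M\<in>matrices m n. real (N_count n i (kernel_code m n M)))
       = 2 ^ (m * n) * (real (card (nontrivial_zero_sum n i)) * ((1/2) ^ m) ^ 3)"
proof -
  have "(\<Sum>M\<in>matrices m n. real (N_count n i (kernel_code m n M)))
      = (\<Sum>t\<in>nontrivial_zero_sum n i. real (kernel_count m n (tuple_list t)))"
    by (simp flip: of_nat_sum add: sum_N_count)
  also have "\<dots> = (\<Sum>t\<in>nontrivial_zero_sum n i. 2 ^ (m * n) * ((1/2) ^ m) ^ 3)"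
    using kernel_count_nontrivial[OF _ assms] by (intro sum.cong) auto
  finally show ?thesis by simp
qed

lemma sum_N_count_squared_le:
  assumes "i \<ge> 1"
  shows "(\<Sum>M\<in>matrices m n. real (N_count n i (kernel_code m n M)) ^ 2)
       \<le> 2 ^ (m * n) * (real (card (nontrivial_zero_sum n i))^2 * ((1/2) ^ m) ^ 6
            + real (card (nontrivial_zero_sum n i))
              * extension_weight_bound ((1/2) ^ m) (card (layer n i)) 3 3)"
proof -
  define Z :: real where "Z = 2 ^ (m * n)"
  define P :: real where "P = (1/2) ^ m"
  define K where "K = real (card (nontrivial_zero_sum n i))"
  define w where "w = extension_weight_bound P (card (layer n i)) 3 3"
  have inner: "(\<Sum>t'\<in>nontrivial_zero_sum n i. real (kernel_count m n (tuple_list t @ tuple_list t')))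
      \<le> K * (Z * P ^ 6) + Z * w" if "t \<in> nontrivial_zero_sum n i" for t
  proof -
    obtain u1 u2 u3 u4 where t: "t = (u1, u2, u3, u4)" by (metis prod.collapse)
    have "extension_weight (layer n i) P 3 [u1, u2, u3] \<le> w"
      using extension_weight_le[of "layer n i" P "[u1, u2, u3]" 3] finite_layer
        nontrivial_zero_sum_independent(1)[OF that[unfolded t] assms]
      unfolding w_def P_def by (simp add: numeral_3_eq_3)
    then have "(\<Sum>t'\<in>nontrivial_zero_sum n i. real (kernel_count m n (tuple_list t @ tuple_list t'))
        - Z * P ^ 6) \<le> Z * w"
      using sum_kernel_count_pair_le[OF that[unfolded t] assms, of m]
      unfolding t Z_def P_def by (smt (verit) mult_left_mono zero_le_power)
    then show ?thesis unfolding sum_subtractf K_def by simp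
  qed
  have "(\<Sum>M\<in>matrices m n. real (N_count n i (kernel_code m n M)) ^ 2)
      = (\<Sum>t\<in>nontrivial_zero_sum n i. \<Sum>t'\<in>nontrivial_zero_sum n i.
          real (kernel_count m n (tuple_list t @ tuple_list t')))"
    by (simp flip: of_nat_sum of_nat_power add: sum_N_count_squared)
  also have "\<dots> \<le> (\<Sum>t\<in>nontrivial_zero_sum n i. K * (Z * P ^ 6) + Z * w)"
    by (rule sum_mono) (rule inner)
  also have "\<dots> = Z * (K^2 * P ^ 6 + K * w)"
    by (simp add: K_def algebra_simps power2_eq_square)
  finally show ?thesis unfolding Z_def P_def K_def w_def .
qed

lemma sum_N_count_variance_le:
  fixes m n i :: nat
  assumes "i \<ge> 1"
  defines "E \<equiv> real (card (nontrivial_zero_sum n i)) * ((1/2) ^ m) ^ 3"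
  shows "(\<Sum>M\<in>matrices m n. (real (N_count n i (kernel_code m n M)) - E)^2)
       \<le> 2 ^ (m * n) * real (card (nontrivial_zero_sum n i))
           * extension_weight_bound ((1/2) ^ m) (card (layer n i)) 3 3"
proof -
  define Z :: real where "Z = 2 ^ (m * n)"
  define N where "N M = real (N_count n i (kernel_code m n M))" for M
  have sum_N: "(\<Sum>M\<in>matrices m n. N M) = Z * E"
    unfolding N_def Z_def E_def using sum_N_count_real[OF assms(1)] by simp
  have "(\<Sum>M\<in>matrices m n. (N M - E)^2) = (\<Sum>M\<in>matrices m n. (N M)^2 - 2 * E * N M + E^2)"
    by (simp add: power2_diff algebra_simps)
  also have "\<dots> = (\<Sum>M\<in>matrices m n. (N M)^2) - 2 * E * (\<Sum>M\<in>matrices m n. N M) + Z * E^2"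
    by (simp add: sum.distrib sum_subtractf sum_distrib_left card_matrices Z_def)
  also have "\<dots> = (\<Sum>M\<in>matrices m n. (N M)^2) - Z * E^2"
    unfolding sum_N by (simp add: power2_eq_square)
  also have "\<dots> \<le> Z * real (card (nontrivial_zero_sum n i))
      * extension_weight_bound ((1/2) ^ m) (card (layer n i)) 3 3"
    using sum_N_count_squared_le[OF assms(1), where m = m and n = n]
    unfolding N_def Z_def E_def by (simp add: power_mult_distrib power_mult[symmetric] algebra_simps)
  finally show ?thesis unfolding N_def Z_def .
qed

section \<open>Tail bounds for a uniformly random matrix\<close>

lemma card_ge_mult_le_sum:
  fixes f :: "'a \<Rightarrow> real"
  assumes "finite A" "\<And>x. 0 \<le> f x"
  shows "real (card {x\<in>A. X \<le> f x}) * X \<le> (\<Sum>x\<in>A. f x)"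
proof -
  have "real (card {x\<in>A. X \<le> f x}) * X \<le> (\<Sum>x\<in>{x\<in>A. X \<le> f x}. f x)"
    using sum_mono[of "{x\<in>A. X \<le> f x}" "\<lambda>_. X" f] by simp
  also have "\<dots> \<le> (\<Sum>x\<in>A. f x)"
    by (rule sum_mono2) (use assms in auto)
  finally show ?thesis .
qed

lemma prob_matrix_le_1: "prob_matrix m n Q \<le> 1"
proof -
  have "card {M \<in> matrices m n. Q M} \<le> card (matrices m n)"
    by (rule card_mono[OF finite_matrices]) auto
  then show ?thesis unfolding prob_matrix_def
    by (cases "card (matrices m n) = 0") (auto simp: divide_le_eq_1)
qed

lemma prob_matrix_ge:
  assumes "real (card {M\<in>matrices m n. \<not> Q M}) \<le> B"
  shows "1 - B / 2 ^ (m * n) \<le> prob_matrix m n Q"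
proof -
  let ?good = "{M\<in>matrices m n. Q M}" and ?bad = "{M\<in>matrices m n. \<not> Q M}"
  have "card (matrices m n) = card (?good \<union> ?bad)"
    by (rule arg_cong[where f = card]) auto
  also have "\<dots> = card ?good + card ?bad"
    by (rule card_Un_disjoint) (auto simp: finite_matrices)
  finally have "real (card (matrices m n)) = real (card ?good) + real (card ?bad)"
    by simp
  then have "(2::real) ^ (m * n) = real (card ?good) + real (card ?bad)"
    by (simp add: card_matrices)
  then have "(2 ^ (m * n) - B) / 2 ^ (m * n) \<le> real (card ?good) / 2 ^ (m * n)"
    using assms by (intro divide_right_mono) auto
  then show ?thesis
    unfolding prob_matrix_def card_matrices by (simp add: diff_divide_distrib)
qed

lemma prob_N_count_small:
  assumes "i \<ge> 1" "n > 0"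
  shows "1 - real (card (nontrivial_zero_sum n i)) * ((1/2) ^ m) ^ 3 / 2 powr (real n * \<theta>)
      \<le> prob_matrix m n (\<lambda>M. N_count n i (kernel_code m n M) = 0 \<or>
            log 2 (real (N_count n i (kernel_code m n M))) / real n \<le> \<theta>)"
proof -
  define X where "X = 2 powr (real n * \<theta>)"
  define N where "N M = real (N_count n i (kernel_code m n M))" for M
  have "{M\<in>matrices m n. \<not> (N_count n i (kernel_code m n M) = 0 \<or>
          log 2 (real (N_count n i (kernel_code m n M))) / real n \<le> \<theta>)}
      \<subseteq> {M\<in>matrices m n. X \<le> N M}"
  proof (intro subsetI CollectI conjI)
    fix M assume "M \<in> {M\<in>matrices m n. \<not> (N_count n i (kernel_code m n M) = 0 \<or>
          log 2 (real (N_count n i (kernel_code m n M))) / real n \<le> \<theta>)}"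
    then have M: "M \<in> matrices m n" and pos: "N M > 0"
      and "\<not> log 2 (N M) / real n \<le> \<theta>"
      by (auto simp: N_def)
    then have "real n * \<theta> < log 2 (N M)"
      using assms(2) by (simp add: field_simps)
    then have "X < 2 powr (log 2 (N M))"
      unfolding X_def by simp
    then show "M \<in> matrices m n" "X \<le> N M"
      using M pos by simp_all
  qed
  then have "real (card {M\<in>matrices m n. \<not> (N_count n i (kernel_code m n M) = 0 \<or>
          log 2 (real (N_count n i (kernel_code m n M))) / real n \<le> \<theta>)})
      \<le> real (card {M\<in>matrices m n. X \<le> N M})"
    by (intro of_nat_mono card_mono) (auto simp: finite_matrices)
  also have "\<dots> \<le> (\<Sum>M\<in>matrices m n. N M) / X"
    using card_ge_mult_le_sum[OF finite_matrices, where f = N and X = X] by (simp add: N_def X_def field_simps)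
  also have "\<dots> = 2 ^ (m * n) * (real (card (nontrivial_zero_sum n i)) * ((1/2) ^ m) ^ 3) / X"
    unfolding N_def using sum_N_count_real[OF assms(1)] by simp
  finally have "real (card {M\<in>matrices m n. \<not> (N_count n i (kernel_code m n M) = 0 \<or>
          log 2 (real (N_count n i (kernel_code m n M))) / real n \<le> \<theta>)})
      \<le> 2 ^ (m * n) * (real (card (nontrivial_zero_sum n i)) * ((1/2) ^ m) ^ 3 / X)"
    by simp
  from prob_matrix_ge[OF this] show ?thesis
    unfolding X_def by simp
qed

text \<open>Chebyshev's inequality: \<open>N\<^sub>i(C)\<close> lies within a factor \<open>2\<close> of its mean \<open>E\<close>
  except with probability at most \<open>Var / (E/2)^2\<close>.\<close>
lemma prob_N_count_concentrated:
  assumes "i \<ge> 1" "n > 0" "card (nontrivial_zero_sum n i) > 0"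
    and close: "\<bar>log 2 (real (card (nontrivial_zero_sum n i)) * ((1/2) ^ m) ^ 3) / real n - \<tau>\<bar>
                  + 1 / real n \<le> \<delta>"
  shows "1 - 4 * extension_weight_bound ((1/2) ^ m) (card (layer n i)) 3 3
             / (real (card (nontrivial_zero_sum n i)) * ((1/2) ^ m) ^ 6)
      \<le> prob_matrix m n (\<lambda>M. N_count n i (kernel_code m n M) > 0 \<and>
            \<bar>log 2 (real (N_count n i (kernel_code m n M))) / real n - \<tau>\<bar> \<le> \<delta>)"
proof -
  define N where "N M = real (N_count n i (kernel_code m n M))" for M
  define K where "K = real (card (nontrivial_zero_sum n i))"
  define P :: real where "P = (1/2) ^ m"
  define E where "E = K * P ^ 3"
  define w where "w = extension_weight_bound P (card (layer n i)) 3 3"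
  have "K > 0" "P > 0" using assms(3) by (simp_all add: K_def P_def)
  then have "E > 0" by (simp add: E_def)
  have good: "N_count n i (kernel_code m n M) > 0 \<and>
      \<bar>log 2 (real (N_count n i (kernel_code m n M))) / real n - \<tau>\<bar> \<le> \<delta>"
    if "\<bar>N M - E\<bar> < E / 2" for M
  proof -
    have "E / 2 < N M" "N M < 2 * E" using that unfolding abs_less_iff by linarith+
    then have "log 2 (E / 2) < log 2 (N M)" "log 2 (N M) < log 2 (2 * E)"
      using \<open>E > 0\<close> by simp_all
    then have "log 2 E - 1 < log 2 (N M)" "log 2 (N M) < log 2 E + 1"
      using \<open>E > 0\<close> by (simp_all add: log_divide log_mult)
    then have "\<bar>log 2 (N M) / real n - log 2 E / real n\<bar> < 1 / real n"
      using assms(2) by (simp add: diff_divide_distrib[symmetric] abs_divide divide_strict_right_mono)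
    then show ?thesis
      using close \<open>E / 2 < N M\<close> \<open>E > 0\<close> unfolding N_def E_def K_def P_def by simp
  qed
  have "real (card {M\<in>matrices m n. \<not> (N_count n i (kernel_code m n M) > 0 \<and>
          \<bar>log 2 (real (N_count n i (kernel_code m n M))) / real n - \<tau>\<bar> \<le> \<delta>)})
      \<le> real (card {M\<in>matrices m n. (E / 2)^2 \<le> (N M - E)^2})"
  proof (intro of_nat_mono card_mono subsetI)
    fix M assume M: "M \<in> {M\<in>matrices m n. \<not> (N_count n i (kernel_code m n M) > 0 \<and>
          \<bar>log 2 (real (N_count n i (kernel_code m n M))) / real n - \<tau>\<bar> \<le> \<delta>)}"
    then have "\<not> \<bar>N M - E\<bar> < E / 2" using good[of M] by blast
    then have "E / 2 \<le> \<bar>N M - E\<bar>" by simp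
    then have "(E / 2)^2 \<le> \<bar>N M - E\<bar>^2"
      using \<open>E > 0\<close> by (intro power_mono) auto
    then show "M \<in> {M\<in>matrices m n. (E / 2)^2 \<le> (N M - E)^2}" using M by simp
  qed (simp add: finite_matrices)
  also have "\<dots> \<le> (\<Sum>M\<in>matrices m n. (N M - E)^2) / (E / 2)^2"
    using card_ge_mult_le_sum[OF finite_matrices, where f = "\<lambda>M. (N M - E)^2" and X = "(E / 2)^2"] \<open>E > 0\<close>
    by (simp add: field_simps)
  also have "\<dots> \<le> 2 ^ (m * n) * K * w / (E / 2)^2"
    using sum_N_count_variance_le[OF assms(1), of n m]
    unfolding N_def K_def w_def E_def P_def by (intro divide_right_mono) auto
  also have "\<dots> = 2 ^ (m * n) * (4 * w / (K * P ^ 6))"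
    using \<open>K > 0\<close> \<open>P > 0\<close> by (simp add: E_def power2_eq_square field_simps)
  finally show ?thesis
    using prob_matrix_ge unfolding w_def K_def P_def by fastforce
qed

section \<open>Asymptotics\<close>

lemma half_power_eq_powr: "(1/2::real) ^ m = 2 powr (- real m)"
  by (simp add: powr_minus powr_realpow power_one_over inverse_eq_divide)

lemma powr_power_eq: "(2 powr x :: real) ^ k = 2 powr (real k * x)"
proof -
  have "(2 powr x :: real) ^ k = (2 powr x) powr real k" by (simp add: powr_realpow)
  then show ?thesis by (simp add: powr_powr mult.commute)
qed

lemma card_zero_sum_4tuples_powr_bounds:
  fixes \<gamma> \<rho> :: real and n :: nat
  defines "T \<equiv> card (zero_sum_4tuples (layer n (nat \<lfloor>\<gamma> * real n\<rfloor>)))"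
  assumes "0 \<le> \<gamma>" "\<gamma> \<le> 1" "n > 0"
  shows "zero_sum_rate \<gamma> n \<le> \<rho> \<Longrightarrow> real T \<le> 2 powr (\<rho> * real n)"
    and "\<rho> < zero_sum_rate \<gamma> n \<Longrightarrow> 2 powr (\<rho> * real n) \<le> real T"
proof -
  have "T > 0"
    unfolding T_def using assms by (intro card_zero_sum_4tuples_layer_pos floor_mult_le)
  moreover have "zero_sum_rate \<gamma> n = log 2 (real T) / real n"
    unfolding zero_sum_rate_def T_def ..
  ultimately show "zero_sum_rate \<gamma> n \<le> \<rho> \<Longrightarrow> real T \<le> 2 powr (\<rho> * real n)"
    and "\<rho> < zero_sum_rate \<gamma> n \<Longrightarrow> 2 powr (\<rho> * real n) \<le> real T"
    using \<open>n > 0\<close> by (simp_all add: field_simps log_le_iff less_log_iff[symmetric] less_imp_le)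
qed

lemma prob_N_count_small_at:
  fixes \<gamma> \<alpha> \<rho> \<theta> :: real and n :: nat
  defines "m \<equiv> nat \<lfloor>\<alpha> * real n\<rfloor>" and "i \<equiv> nat \<lfloor>\<gamma> * real n\<rfloor>"
  assumes \<gamma>: "0 < \<gamma>" "\<gamma> \<le> 1" and n: "n > 0" "n \<in> int_mult_set \<alpha>" "n \<in> int_mult_set \<gamma>"
    and rate: "zero_sum_rate \<gamma> n \<le> \<rho>"
  shows "1 - 2 powr (- ((\<theta> + 3 * \<alpha> - \<rho>) * real n))
    \<le> prob_matrix m n (\<lambda>M. N_count n i (kernel_code m n M) = 0 \<or>
          log 2 (real (N_count n i (kernel_code m n M))) / real n \<le> \<theta>)"
proof -
  have "real m = \<alpha> * real n" "real i = \<gamma> * real n"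
    unfolding m_def i_def using int_mult_set_floor n(2,3) by blast+
  then have "i \<ge> 1" using \<gamma> n by (metis One_nat_def Suc_leI mult_pos_pos of_nat_0_less_iff)
  have "real (card (nontrivial_zero_sum n i)) \<le> 2 powr (\<rho> * real n)"
    using card_nontrivial_zero_sum_le[of n i] card_zero_sum_4tuples_powr_bounds(1)[of \<gamma> n \<rho>] \<gamma> n rate
    unfolding i_def by (meson of_nat_le_iff order_trans less_imp_le)
  then have "real (card (nontrivial_zero_sum n i)) * ((1/2) ^ m) ^ 3 / 2 powr (real n * \<theta>)
      \<le> 2 powr (\<rho> * real n) * 2 powr (- (3 * (\<alpha> * real n))) / 2 powr (real n * \<theta>)"
    unfolding half_power_eq_powr powr_power_eq \<open>real m = \<alpha> * real n\<close>
    by (intro divide_right_mono mult_right_mono) auto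
  also have "\<dots> = 2 powr (- ((\<theta> + 3 * \<alpha> - \<rho>) * real n))"
    by (simp add: powr_add[symmetric] powr_diff[symmetric] algebra_simps)
  finally show ?thesis
    using prob_N_count_small[OF \<open>i \<ge> 1\<close> \<open>n > 0\<close>, of m \<theta>] by linarith
qed

lemma card_nontrivial_zero_sum_bounds:
  fixes \<gamma> \<rho> \<epsilon> :: real and n :: nat
  defines "i \<equiv> nat \<lfloor>\<gamma> * real n\<rfloor>"
  assumes \<gamma>: "0 < \<gamma>" "\<gamma> < 1" and n: "n > 0" "n \<in> int_mult_set \<gamma>"
    and rate: "\<rho> - \<epsilon> < zero_sum_rate \<gamma> n" "zero_sum_rate \<gamma> n \<le> \<rho>"
    and large: "6 * 2 powr (2 * bin_entropy \<gamma> * real n) \<le> 2 powr ((\<rho> - \<epsilon>) * real n)"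
  shows "2 powr ((\<rho> - \<epsilon>) * real n) / 2 \<le> real (card (nontrivial_zero_sum n i))"
    and "real (card (nontrivial_zero_sum n i)) \<le> 2 powr (\<rho> * real n)"
proof -
  define T where "T = card (zero_sum_4tuples (layer n i))"
  define l where "l = card (layer n i)"
  note T_bounds = card_zero_sum_4tuples_powr_bounds[of \<gamma> n, folded i_def T_def]
  have "real l ^ 2 \<le> (2 powr (real n * bin_entropy \<gamma>)) ^ 2"
    unfolding l_def using card_layer_le_entropy[OF \<gamma>, of i n] int_mult_set_floor[OF n(2)]
    by (intro power_mono) (auto simp: i_def)
  also have "\<dots> = 2 powr (2 * bin_entropy \<gamma> * real n)"
    unfolding powr_power_eq by (simp add: ac_simps)
  finally have l_le: "real l ^ 2 \<le> 2 powr (2 * bin_entropy \<gamma> * real n)" .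
  have "T \<le> card (nontrivial_zero_sum n i) + 3 * l ^ 2"
    unfolding T_def l_def by (rule card_zero_sum_4tuples_layer_le_nontrivial)
  then have "real T \<le> real (card (nontrivial_zero_sum n i) + 3 * l ^ 2)"
    by (simp only: of_nat_le_iff)
  then have "real T \<le> real (card (nontrivial_zero_sum n i)) + 3 * real l ^ 2"
    by simp
  moreover have "2 powr ((\<rho> - \<epsilon>) * real n) \<le> real T"
    using T_bounds(2) \<gamma> n(1) rate(1) by simp
  ultimately show "2 powr ((\<rho> - \<epsilon>) * real n) / 2 \<le> real (card (nontrivial_zero_sum n i))"
    using l_le large by linarith
  have "real T \<le> 2 powr (\<rho> * real n)"
    using T_bounds(1) \<gamma> n(1) rate(2) by simp
  then show "real (card (nontrivial_zero_sum n i)) \<le> 2 powr (\<rho> * real n)"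
    using card_nontrivial_zero_sum_le[of n i] unfolding T_def by (meson of_nat_le_iff order_trans)
qed

text \<open>With \<open>P = 2^(-\<alpha> n)\<close> and \<open>l \<le> 2^(h n)\<close> the three terms of
  \<open>extension_weight_bound P l 3 3 / P^6\<close> are at most \<open>2^((2h + \<alpha>) n)\<close> each.\<close>
lemma variance_ratio_le:
  fixes K l P \<alpha> h a :: real
  assumes P: "P = 2 powr (- (\<alpha> * real n))" and l: "1 \<le> l" "l \<le> 2 powr (h * real n)"
    and \<alpha>: "0 \<le> \<alpha>" "\<alpha> \<le> h" and K: "2 powr (a * real n) / 2 \<le> K"
  shows "4 * extension_weight_bound P l 3 3 / (K * P ^ 6)
    \<le> 8128 * 2 powr (- ((a - (2 * h + \<alpha>)) * real n))"
proof -
  define Q where "Q = 2 powr (\<alpha> * real n)"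
  define B where "B = 2 powr ((2 * h + \<alpha>) * real n)"
  have "Q \<ge> 1" unfolding Q_def using \<alpha> by (intro ge_one_powr_ge_zero) auto
  have "P > 0" unfolding P by simp
  have "2 powr (a * real n) / 2 > 0" by simp
  then have "K > 0" using K by linarith
  have "extension_weight_bound P l 3 3 = P ^ 6 * (512 * Q ^ 3 + 448 * l * Q ^ 2 + 56 * l ^ 2 * Q)"
  proof -
    have "P * Q = 1" unfolding P Q_def powr_add[symmetric] by simp
    then show ?thesis unfolding extension_weight_bound_3_3 by algebra
  qed
  then have weight: "extension_weight_bound P l 3 3 / P ^ 6 = 512 * Q ^ 3 + 448 * l * Q ^ 2 + 56 * l ^ 2 * Q"
    using \<open>P > 0\<close> by simp
  have bounds: "Q ^ 3 \<le> B" "l * Q ^ 2 \<le> B" "l ^ 2 * Q \<le> B"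
  proof -
    have "Q ^ 3 = 2 powr (3 * \<alpha> * real n)"
      unfolding Q_def powr_power_eq by (simp add: algebra_simps)
    moreover have "l * Q ^ 2 \<le> 2 powr (h * real n) * Q ^ 2"
      using l(2) by (simp add: mult_right_mono)
    moreover have "l ^ 2 * Q \<le> (2 powr (h * real n)) ^ 2 * Q"
      using l \<open>Q \<ge> 1\<close> by (intro mult_right_mono power_mono) auto
    moreover have "2 powr (h * real n) * Q ^ 2 = 2 powr ((h + 2 * \<alpha>) * real n)"
      "(2 powr (h * real n)) ^ 2 * Q = 2 powr ((2 * h + \<alpha>) * real n)"
      unfolding Q_def powr_power_eq by (simp_all add: powr_add[symmetric] algebra_simps)
    ultimately have "Q ^ 3 = 2 powr (3 * \<alpha> * real n)"
      "l * Q ^ 2 \<le> 2 powr ((h + 2 * \<alpha>) * real n)"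
      "l ^ 2 * Q \<le> 2 powr ((2 * h + \<alpha>) * real n)"
      by simp_all
    moreover have "3 * \<alpha> * real n \<le> (2 * h + \<alpha>) * real n" "(h + 2 * \<alpha>) * real n \<le> (2 * h + \<alpha>) * real n"
      using \<alpha> by (auto intro!: mult_right_mono)
    ultimately show "Q ^ 3 \<le> B" "l * Q ^ 2 \<le> B" "l ^ 2 * Q \<le> B"
      unfolding B_def by (smt (verit) powr_mono)+
  qed
  have "4 * extension_weight_bound P l 3 3 / (K * P ^ 6)
      = 4 * (extension_weight_bound P l 3 3 / P ^ 6) / K"
    using \<open>K > 0\<close> \<open>P > 0\<close> by (simp add: field_simps)
  also have "\<dots> \<le> 4 * (1016 * B) / K"
    unfolding weight using bounds \<open>K > 0\<close> by (intro divide_right_mono) auto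
  also have "\<dots> \<le> 4 * (1016 * B) / (2 powr (a * real n) / 2)"
    using K \<open>K > 0\<close> by (intro divide_left_mono) (auto simp: B_def)
  also have "\<dots> = 8128 * (B / 2 powr (a * real n))"
    by simp
  also have "B / 2 powr (a * real n) = 2 powr (- ((a - (2 * h + \<alpha>)) * real n))"
    unfolding B_def by (simp add: powr_diff[symmetric] algebra_simps)
  finally show ?thesis .
qed

lemma prob_N_count_concentrated_at:
  fixes \<gamma> \<alpha> \<rho> \<epsilon> \<delta> :: real and n :: nat
  defines "m \<equiv> nat \<lfloor>\<alpha> * real n\<rfloor>" and "i \<equiv> nat \<lfloor>\<gamma> * real n\<rfloor>"
  assumes \<gamma>: "0 < \<gamma>" "\<gamma> < 1" and \<alpha>: "0 \<le> \<alpha>" "\<alpha> \<le> bin_entropy \<gamma>"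
    and n: "n > 0" "n \<in> int_mult_set \<alpha>" "n \<in> int_mult_set \<gamma>"
    and rate: "\<rho> - \<epsilon> < zero_sum_rate \<gamma> n" "zero_sum_rate \<gamma> n \<le> \<rho>"
    and large: "6 * 2 powr (2 * bin_entropy \<gamma> * real n) \<le> 2 powr ((\<rho> - \<epsilon>) * real n)"
    and \<delta>: "\<epsilon> + 2 / real n \<le> \<delta>"
  shows "1 - 8128 * 2 powr (- ((\<rho> - \<epsilon> - (2 * bin_entropy \<gamma> + \<alpha>)) * real n))
    \<le> prob_matrix m n (\<lambda>M. N_count n i (kernel_code m n M) > 0 \<and>
        \<bar>log 2 (real (N_count n i (kernel_code m n M))) / real n - (\<rho> - 3 * \<alpha>)\<bar> \<le> \<delta>)"
proof -
  define K where "K = card (nontrivial_zero_sum n i)"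
  have K: "2 powr ((\<rho> - \<epsilon>) * real n) / 2 \<le> real K" "real K \<le> 2 powr (\<rho> * real n)"
    unfolding K_def i_def by (rule card_nontrivial_zero_sum_bounds[OF \<gamma> n(1,3) rate large])+
  have "2 powr ((\<rho> - \<epsilon>) * real n) / 2 > 0" by simp
  then have "real K > 0" using K(1) by linarith
  have mi: "real m = \<alpha> * real n" "real i = \<gamma> * real n"
    unfolding m_def i_def using int_mult_set_floor n(2,3) by blast+
  then have "i \<ge> 1" using \<gamma> n(1) by (metis One_nat_def Suc_leI mult_pos_pos of_nat_0_less_iff)
  have "i \<le> n" unfolding i_def using \<gamma> by (intro floor_mult_le) auto
  have P: "(1/2::real) ^ m = 2 powr (- (\<alpha> * real n))"
    unfolding half_power_eq_powr mi(1) ..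
  have "log 2 (real K) \<le> \<rho> * real n"
    using K(2) \<open>real K > 0\<close> by (simp add: log_le_iff)
  moreover have "2 powr ((\<rho> - \<epsilon>) * real n - 1) \<le> real K"
    using K(1) by (simp add: powr_diff)
  then have "(\<rho> - \<epsilon>) * real n - 1 \<le> log 2 (real K)"
    using \<open>real K > 0\<close> by (simp add: le_log_iff)
  moreover have "log 2 (real K * ((1/2) ^ m) ^ 3) / real n - (\<rho> - 3 * \<alpha>)
      = log 2 (real K) / real n - \<rho>"
    using \<open>real K > 0\<close> n(1)
    by (simp add: P powr_power_eq log_mult diff_divide_distrib algebra_simps)
  ultimately have close: "\<bar>log 2 (real K * ((1/2) ^ m) ^ 3) / real n - (\<rho> - 3 * \<alpha>)\<bar> + 1 / real n \<le> \<delta>"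
    using \<delta> n(1) by (simp add: abs_le_iff field_simps)
  have "1 \<le> real (card (layer n i))"
    using \<open>i \<le> n\<close> by (simp add: card_layer Suc_leI)
  moreover have "real (card (layer n i)) \<le> 2 powr (bin_entropy \<gamma> * real n)"
    using card_layer_le_entropy[OF \<gamma> mi(2)] by (simp add: mult.commute)
  ultimately have "4 * extension_weight_bound ((1/2) ^ m) (card (layer n i)) 3 3 / (real K * ((1/2) ^ m) ^ 6)
      \<le> 8128 * 2 powr (- ((\<rho> - \<epsilon> - (2 * bin_entropy \<gamma> + \<alpha>)) * real n))"
    using variance_ratio_le[OF P _ _ \<alpha> K(1)] by simp
  then show ?thesis
    using prob_N_count_concentrated[OF \<open>i \<ge> 1\<close> n(1) _ close[unfolded K_def]] \<open>real K > 0\<close>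
    unfolding K_def by fastforce
qed

lemma powr_neg_tendsto_zero: "c > 0 \<Longrightarrow> ((\<lambda>n::nat. C * 2 powr (- (c * real n))) \<longlongrightarrow> 0) at_top"
  by real_asymp

lemma prob_N_count_small_tendsto:
  fixes \<gamma> \<alpha> \<rho> \<theta> :: real and F :: "nat filter"
  assumes \<gamma>: "0 < \<gamma>" "\<gamma> \<le> 1"
    and rate: "\<And>n. n \<in> int_mult_set \<gamma> \<Longrightarrow> n > 0 \<Longrightarrow> zero_sum_rate \<gamma> n \<le> \<rho>"
    and F: "F \<le> at_top" "eventually (\<lambda>n. n \<in> int_mult_set \<alpha> \<and> n \<in> int_mult_set \<gamma>) F"
    and "\<rho> < \<theta> + 3 * \<alpha>"
  shows "((\<lambda>n. prob_matrix (nat \<lfloor>\<alpha> * real n\<rfloor>) n (\<lambda>M.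
      N_count n (nat \<lfloor>\<gamma> * real n\<rfloor>) (kernel_code (nat \<lfloor>\<alpha> * real n\<rfloor>) n M) = 0 \<or>
      log 2 (real (N_count n (nat \<lfloor>\<gamma> * real n\<rfloor>) (kernel_code (nat \<lfloor>\<alpha> * real n\<rfloor>) n M))) / real n
        \<le> \<theta>)) \<longlongrightarrow> 1) F" (is "(?p \<longlongrightarrow> 1) F")
proof -
  define c where "c = \<theta> + 3 * \<alpha> - \<rho>"
  have lower: "eventually (\<lambda>n. 1 - 2 powr (- (c * real n)) \<le> ?p n) F"
    using F(2) filter_leD[OF F(1) eventually_gt_at_top[of 0]]
    by eventually_elim (use prob_N_count_small_at \<gamma> rate in \<open>simp add: c_def\<close>)
  have "((\<lambda>n. 2 powr (- (c * real n))) \<longlongrightarrow> 0) at_top"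
    using \<open>\<rho> < \<theta> + 3 * \<alpha>\<close> powr_neg_tendsto_zero[of c 1] unfolding c_def by simp
  then have "((\<lambda>n. 1 - 2 powr (- (c * real n))) \<longlongrightarrow> 1 - 0) at_top"
    by (intro tendsto_diff tendsto_const)
  then have "((\<lambda>n. 1 - 2 powr (- (c * real n))) \<longlongrightarrow> 1) F"
    using F(1) by (simp add: tendsto_mono)
  from tendsto_sandwich[OF lower _ this tendsto_const] show ?thesis
    by (simp add: prob_matrix_le_1)
qed

lemma eventually_powr_le_powr:
  assumes "a < b"
  shows "eventually (\<lambda>n::nat. C * 2 powr (a * real n) \<le> 2 powr (b * real n)) at_top"
proof -
  have "filterlim (\<lambda>n::nat. 2 powr ((b - a) * real n)) at_top at_top"
    using assms by real_asymp
  then have "eventually (\<lambda>n. C \<le> 2 powr ((b - a) * real n)) at_top"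
    by (simp add: filterlim_at_top)
  then show ?thesis
  proof eventually_elim
    case (elim n)
    then have "C * 2 powr (a * real n) \<le> 2 powr ((b - a) * real n) * 2 powr (a * real n)"
      by (intro mult_right_mono) auto
    also have "\<dots> = 2 powr (b * real n)"
      by (simp add: powr_add[symmetric] algebra_simps)
    finally show ?case .
  qed
qed

lemma prob_N_count_concentrated_tendsto:
  fixes \<gamma> \<alpha> \<rho> \<delta> :: real and F :: "nat filter"
  assumes \<gamma>: "0 < \<gamma>" "\<gamma> < 1" and \<alpha>: "0 \<le> \<alpha>" "\<alpha> \<le> bin_entropy \<gamma>"
    and lim: "(zero_sum_rate \<gamma> \<longlongrightarrow> \<rho>) F"
    and rate: "\<And>n. n \<in> int_mult_set \<gamma> \<Longrightarrow> n > 0 \<Longrightarrow> zero_sum_rate \<gamma> n \<le> \<rho>"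
    and F: "F \<le> at_top" "eventually (\<lambda>n. n \<in> int_mult_set \<alpha> \<and> n \<in> int_mult_set \<gamma>) F"
    and "2 * bin_entropy \<gamma> + \<alpha> < \<rho>" "\<delta> > 0"
  shows "((\<lambda>n. prob_matrix (nat \<lfloor>\<alpha> * real n\<rfloor>) n (\<lambda>M.
      N_count n (nat \<lfloor>\<gamma> * real n\<rfloor>) (kernel_code (nat \<lfloor>\<alpha> * real n\<rfloor>) n M) > 0 \<and>
      \<bar>log 2 (real (N_count n (nat \<lfloor>\<gamma> * real n\<rfloor>) (kernel_code (nat \<lfloor>\<alpha> * real n\<rfloor>) n M))) / real n
        - (\<rho> - 3 * \<alpha>)\<bar> \<le> \<delta>)) \<longlongrightarrow> 1) F" (is "(?p \<longlongrightarrow> 1) F")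
proof -
  define \<epsilon> where "\<epsilon> = min (\<delta> / 2) ((\<rho> - (2 * bin_entropy \<gamma> + \<alpha>)) / 2)"
  define c where "c = \<rho> - \<epsilon> - (2 * bin_entropy \<gamma> + \<alpha>)"
  have "\<epsilon> > 0"
    using assms unfolding \<epsilon>_def by simp
  have "\<epsilon> \<le> (\<rho> - (2 * bin_entropy \<gamma> + \<alpha>)) / 2"
    unfolding \<epsilon>_def by (rule min.cobounded2)
  then have "c > 0" "2 * bin_entropy \<gamma> < \<rho> - \<epsilon>"
    using \<open>\<epsilon> > 0\<close> \<alpha> by (simp_all add: c_def)
  have large_n: "eventually (\<lambda>n. n > 0 \<and> \<epsilon> + 2 / real n \<le> \<delta> \<and>
      6 * 2 powr (2 * bin_entropy \<gamma> * real n) \<le> 2 powr ((\<rho> - \<epsilon>) * real n)) at_top"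
  proof (intro eventually_conj)
    show "eventually (\<lambda>n. \<epsilon> + 2 / real n \<le> \<delta>) at_top"
      using \<open>\<delta> > 0\<close> unfolding \<epsilon>_def by real_asymp
  qed (use eventually_powr_le_powr[OF \<open>2 * bin_entropy \<gamma> < \<rho> - \<epsilon>\<close>] in auto)
  have "\<rho> - \<epsilon> < \<rho>" using \<open>\<epsilon> > 0\<close> by simp
  have "eventually (\<lambda>n. (n > 0 \<and> \<epsilon> + 2 / real n \<le> \<delta> \<and>
      6 * 2 powr (2 * bin_entropy \<gamma> * real n) \<le> 2 powr ((\<rho> - \<epsilon>) * real n)) \<and>
      (n \<in> int_mult_set \<alpha> \<and> n \<in> int_mult_set \<gamma>) \<and> \<rho> - \<epsilon> < zero_sum_rate \<gamma> n) F"
    by (rule eventually_conj[OF filter_leD[OF F(1) large_n]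
          eventually_conj[OF F(2) order_tendstoD(1)[OF lim \<open>\<rho> - \<epsilon> < \<rho>\<close>]]])
  then have lower: "eventually (\<lambda>n. 1 - 8128 * 2 powr (- (c * real n)) \<le> ?p n) F"
  proof (rule eventually_mono)
    fix n assume n: "(n > 0 \<and> \<epsilon> + 2 / real n \<le> \<delta> \<and>
      6 * 2 powr (2 * bin_entropy \<gamma> * real n) \<le> 2 powr ((\<rho> - \<epsilon>) * real n)) \<and>
      (n \<in> int_mult_set \<alpha> \<and> n \<in> int_mult_set \<gamma>) \<and> \<rho> - \<epsilon> < zero_sum_rate \<gamma> n"
    then have "zero_sum_rate \<gamma> n \<le> \<rho>" using rate by blast
    with n show "1 - 8128 * 2 powr (- (c * real n)) \<le> ?p n"
      unfolding c_def by (intro prob_N_count_concentrated_at[OF \<gamma> \<alpha>]) auto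
  qed
  have "((\<lambda>n. 1 - 8128 * 2 powr (- (c * real n))) \<longlongrightarrow> 1 - 0) at_top"
    using \<open>c > 0\<close> by (intro tendsto_diff tendsto_const powr_neg_tendsto_zero)
  then have "((\<lambda>n. 1 - 8128 * 2 powr (- (c * real n))) \<longlongrightarrow> 1) F"
    using F(1) by (simp add: tendsto_mono)
  from tendsto_sandwich[OF lower _ this tendsto_const] show ?thesis
    by (simp add: prob_matrix_le_1)
qed

lemma inf_int_mult_filter:
  "inf (int_mult_filter x) (int_mult_filter y) \<le> at_top"
  "eventually (\<lambda>n. n \<in> int_mult_set x \<and> n \<in> int_mult_set y)
     (inf (int_mult_filter x) (int_mult_filter y))"
proof -
  have in_set: "eventually (\<lambda>n. n \<in> int_mult_set x) (int_mult_filter x)" for x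
    unfolding int_mult_filter_eq eventually_inf_principal by simp
  show "inf (int_mult_filter x) (int_mult_filter y) \<le> at_top"
    by (simp add: int_mult_filter_eq le_infI2)
  show "eventually (\<lambda>n. n \<in> int_mult_set x \<and> n \<in> int_mult_set y)
      (inf (int_mult_filter x) (int_mult_filter y))"
    using filter_leD[OF inf_le1 in_set] filter_leD[OF inf_le2 in_set] by (rule eventually_conj)
qed

lemma int_mult_filter_eq_bot:
  assumes "\<And>n. n > 0 \<Longrightarrow> n \<notin> int_mult_set x"
  shows "int_mult_filter x = bot"
  unfolding int_mult_filter_eq trivial_limit_def eventually_inf_principal eventually_at_top_linorder
  using assms by (intro exI[of _ 1]) auto

theorem proposition1p5:
  fixes R \<gamma> :: real
  assumes "0 < R" "R < 1" "0 < \<gamma>" "\<gamma> \<le> 1/2" "bin_entropy \<gamma> > 1 - R"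
  defines "F \<equiv> inf (int_mult_filter (1 - R)) (int_mult_filter \<gamma>)"
      and "m \<equiv> (\<lambda>n::nat. nat \<lfloor>(1 - R) * real n\<rfloor>)"
      and "i \<equiv> (\<lambda>n::nat. nat \<lfloor>\<gamma> * real n\<rfloor>)"
  shows "(psi4 \<gamma> < 1 - R \<longrightarrow>
           (\<exists>c>0. ((\<lambda>n. prob_matrix (m n) n (\<lambda>M.
                 N_count n (i n) (kernel_code (m n) n M) = 0 \<or>
                 log 2 (real (N_count n (i n) (kernel_code (m n) n M))) / real n
                   \<le> 2 * bin_entropy \<gamma> - 2 * (1 - R) - c)) \<longlongrightarrow> 1) F))
       \<and> (psi4 \<gamma> > 1 - R \<longrightarrow>
           (\<forall>\<delta>>0. ((\<lambda>n. prob_matrix (m n) n (\<lambda>M.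
                 N_count n (i n) (kernel_code (m n) n M) > 0 \<and>
                 \<bar>log 2 (real (N_count n (i n) (kernel_code (m n) n M))) / real n
                   - (psi4 \<gamma> + 2 * bin_entropy \<gamma> - 3 * (1 - R))\<bar> \<le> \<delta>)) \<longlongrightarrow> 1) F))"
proof -
  have \<gamma>: "0 < \<gamma>" "\<gamma> < 1" using assms(3,4) by auto
  note F = inf_int_mult_filter[of "1 - R" \<gamma>, folded F_def]
  show ?thesis
  proof (cases "\<exists>n0>0. n0 \<in> int_mult_set \<gamma>")
    case False
    then have "int_mult_filter \<gamma> = bot" by (intro int_mult_filter_eq_bot) blast
    then have "F = bot" unfolding F_def by simp
    then show ?thesis by (auto intro: exI[of _ 1])
  next
    case True
    then obtain n0 where "n0 > 0" "n0 \<in> int_mult_set \<gamma>" by blast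
    note rate = zero_sum_rate_limit[OF less_imp_le[OF \<gamma>(1)] less_imp_le[OF \<gamma>(2)] this(2,1)]
    have lim: "(zero_sum_rate \<gamma> \<longlongrightarrow> psi4 \<gamma> + 2 * bin_entropy \<gamma>) F"
      unfolding F_def using rate(1) by (rule tendsto_mono[rotated]) simp
    define c where "c = (1 - R - psi4 \<gamma>) / 2"
    have "psi4 \<gamma> < 1 - R \<Longrightarrow>
        c > 0 \<and> psi4 \<gamma> + 2 * bin_entropy \<gamma> < 2 * bin_entropy \<gamma> - 2 * (1 - R) - c + 3 * (1 - R)"
      unfolding c_def by (simp add: field_simps)
    then show ?thesis
      unfolding m_def i_def
      using prob_N_count_small_tendsto[OF \<gamma>(1) less_imp_le[OF \<gamma>(2)] rate(2) F]
        prob_N_count_concentrated_tendsto[OF \<gamma> _ _ lim rate(2) F] assms(2,5)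
      by (intro conjI impI allI exI[of _ c]) auto
  qed
qed

end
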